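(* Let $n \ge 1$ and $m \ge 1$ be integers, let $\lambda > 1$ be a real number, and let $a_\alpha$, $a$, $b$, $f$ be as in the context (in particular $b(x) \ge a^\lambda(x) f(x)$ for almost all $x$). Suppose that for some real number $\sigma > 1$, $$\int_1^\infty r^{(m - n)\lambda + n - 1} q(r)\, dr = \infty, \qquad \text{where } q(r) = \mathop{\rm ess\,inf}_{B_{\sigma r} \setminus B_{r/\sigma}} f .$$ Then every solution $u$ of the inequality $$\sum_{|\alpha| = m} (-1)^m \partial^\alpha a_\alpha(x, u) \ge b(x) |u|^\lambda \quad \text{in } \mathbb{R}^n$$ is trivial, i.e. $u(x) = 0$ for almost all $x \in \mathbb{R}^n$.
   Context: For each multi-index $\alpha = (\alpha_1,\dots,\alpha_n)$ with $|\alpha| = \alpha_1 + \dots + \alpha_n = m$, $a_\alpha : \mathbb{R}^n \times \mathbb{R} \to \mathbb{R}$ is a given function, and $\partial^\alpha = \partial^{|\alpha|}/\partial x_1^{\alpha_1}\cdots\partial x_n^{\alpha_n}$. The function $b : \mathbb{R}^n \to (0,\infty)$ is positive and measurable; $a : \mathbb{R}^n \to [0,\infty)$ is a measurable function (not necessarily strictly positive) such that $|a_\alpha(x,\zeta)| \le a(x)|\zeta|$ for almost all $x \in \mathbb{R}^n$, all $\zeta \in \mathbb{R}$ and all $|\alpha| = m$; and $f \in L_{\infty,loc}(\mathbb{R}^n)$ is a non-negative function with $b(x) \ge a^\lambda(x) f(x)$ for almost all $x \in \mathbb{R}^n$. $B_r$ denotes the open ball in $\mathbb{R}^n$ of radius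 $r>0$ centered at the origin. A function $u$ is called a solution of the inequality if $b(x)|u|^\lambda \in L_{1,loc}(\mathbb{R}^n)$, $a_\alpha(x,u) \in L_{1,loc}(\mathbb{R}^n)$ for all $|\alpha| = m$, and $$\int_{\mathbb{R}^n} \sum_{|\alpha|=m} a_\alpha(x,u)\, \partial^\alpha \varphi \, dx \ge \int_{\mathbb{R}^n} b(x)|u|^\lambda \varphi\, dx$$ for every non-negative $\varphi \in C_0^\infty(\mathbb{R}^n)$. *)

theory Defs
  imports "HOL-Analysis.Analysis"
begin

text \<open>Space R^n is modelled as real^'n with n = CARD('n). Multi-indices are
functions 'n => nat; |alpha| = sum alpha UNIV.\<close>

definition partial_dir :: "'n::finite \<Rightarrow> (real^'n \<Rightarrow> real) \<Rightarrow> real^'n \<Rightarrow> real" where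
  "partial_dir i \<phi> x = deriv (\<lambda>t. \<phi> (x + t *\<^sub>R axis i 1)) 0"

fun iter_partial :: "'n::finite list \<Rightarrow> (real^'n \<Rightarrow> real) \<Rightarrow> real^'n \<Rightarrow> real" where
  "iter_partial [] \<phi> = \<phi>"
| "iter_partial (i # is) \<phi> = partial_dir i (iter_partial is \<phi>)"

definition smooth_fun :: "(real^'n::finite \<Rightarrow> real) \<Rightarrow> bool" where
  "smooth_fun \<phi> \<longleftrightarrow>
     (\<forall>is. continuous_on UNIV (iter_partial is \<phi>) \<and>
        (\<forall>i x. (\<lambda>t. iter_partial is \<phi> (x + t *\<^sub>R axis i 1)) differentiable (at 0)))"

definition test_fun :: "(real^'n::finite \<Rightarrow> real) \<Rightarrow> bool" where
  "test_fun \<phi> \<longleftrightarrow> smooth_fun \<phi> \<and> compact (closure {x. \<phi> x \<noteq> 0})"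

text \<open>The mixed partial derivative of multi-index alpha (order of differentiation
is immaterial for smooth functions; a list realising alpha is chosen).\<close>
definition dpartial :: "('n::finite \<Rightarrow> nat) \<Rightarrow> (real^'n \<Rightarrow> real) \<Rightarrow> real^'n \<Rightarrow> real" where
  "dpartial \<alpha> \<phi> = iter_partial (SOME xs. \<forall>i. count_list xs i = \<alpha> i) \<phi>"

definition multi_indices :: "nat \<Rightarrow> ('n::finite \<Rightarrow> nat) set" where
  "multi_indices m = {\<alpha>. (\<Sum>i\<in>UNIV. \<alpha> i) = m}"

definition loc_integrable :: "(real^'n::finite \<Rightarrow> real) \<Rightarrow> bool" where
  "loc_integrable g \<longleftrightarrow> (\<forall>K. compact K \<longrightarrow> set_integrable lborel K g)"

definition loc_ess_bounded :: "(real^'n::finite \<Rightarrow> real) \<Rightarrow> bool" where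
  "loc_ess_bounded g \<longleftrightarrow> g \<in> borel_measurable lborel \<and>
     (\<forall>K. compact K \<longrightarrow> (\<exists>C. AE x in lborel. x \<in> K \<longrightarrow> \<bar>g x\<bar> \<le> C))"

definition ess_inf_on :: "(real^'n::finite) set \<Rightarrow> (real^'n \<Rightarrow> real) \<Rightarrow> ereal" where
  "ess_inf_on S f = Sup {c::ereal. AE x in lborel. x \<in> S \<longrightarrow> c \<le> ereal (f x)}"

text \<open>u is a (weak) solution of sum_{|alpha|=m} (-1)^m D^alpha a_alpha(x,u) >= b |u|^lambda.\<close>
definition is_solution ::
  "nat \<Rightarrow> (('n::finite \<Rightarrow> nat) \<Rightarrow> real^'n \<Rightarrow> real \<Rightarrow> real) \<Rightarrow> (real^'n \<Rightarrow> real) \<Rightarrow> real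
     \<Rightarrow> (real^'n \<Rightarrow> real) \<Rightarrow> bool" where
  "is_solution m A b lam u \<longleftrightarrow>
     loc_integrable (\<lambda>x. b x * \<bar>u x\<bar> powr lam) \<and>
     (\<forall>\<alpha>\<in>multi_indices m. loc_integrable (\<lambda>x. A \<alpha> x (u x))) \<and>
     (\<forall>\<phi>. test_fun \<phi> \<and> (\<forall>x. 0 \<le> \<phi> x) \<longrightarrow>
        (\<integral>x. b x * \<bar>u x\<bar> powr lam * \<phi> x \<partial>lborel)
          \<le> (\<integral>x. (\<Sum>\<alpha>\<in>multi_indices m. A \<alpha> x (u x) * dpartial \<alpha> \<phi> x) \<partial>lborel))"

end

theory Submission
  imports Defs "HOL-Computational_Algebra.Polynomial" "HOL-Library.Multiset"
begin

text \<open>Test the inequality with \<open>\<phi>\<^sub>R(x) = \<eta>(x/R)\<^sup>s\<close>, where \<open>\<eta>\<close> is a smooth radial bump equal to 1 on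
  the unit ball and vanishing outside the ball of radius \<open>\<theta>\<close>, and \<open>s\<close> is so large that
  \<open>|\<partial>\<^sup>\<alpha>\<phi>\<^sub>R| \<le> C R\<^sup>-\<^sup>m \<phi>\<^sub>R\<^sup>1\<^sup>/\<^sup>\<lambda>\<close> on the shell \<open>R < |x| \<le> \<theta>R\<close>. Writing \<open>J(R)\<close> for the integral of
  \<open>b|u|\<^sup>\<lambda>\<close> over \<open>B\<^sub>R\<close>, Young's inequality absorbs the right-hand side of the weak inequality
  into the left and yields, whenever \<open>f \<ge> c\<close> on the shell,
  \<open>c R\<^sup>p J(R)\<^sup>\<lambda> \<le> C (J(\<theta>R) - J(R))\<close> and \<open>c R\<^sup>p J(R)\<^sup>\<lambda>\<^sup>-\<^sup>1 \<le> C\<close> with \<open>p = (m - n)\<lambda> + n\<close>.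
  Together these bound \<open>c R\<^sup>p\<close> by a multiple of \<open>J(R)\<^sup>1\<^sup>-\<^sup>\<lambda> - J(\<theta>R)\<^sup>1\<^sup>-\<^sup>\<lambda>\<close>. If \<open>u\<close> is nontrivial,
  \<open>J(\<theta>\<^sup>k) > 0\<close> for large \<open>k\<close>, so summing over the radii \<open>R = \<theta>\<^sup>k\<close> telescopes, and the divergent
  integral, split into the intervals \<open>[\<theta>\<^sup>k, \<theta>\<^sup>k\<^sup>+\<^sup>1)\<close> with \<open>\<theta>\<^sup>2 = \<sigma>\<close>, would be finite.\<close>

section \<open>Infinitely differentiable functions of one variable\<close>

definition smooth_real :: "(real \<Rightarrow> real) set" where
  "smooth_real = {F. \<exists>H. H 0 = F \<and> (\<forall>k t. (H k has_real_derivative H (Suc k) t) (at t))}"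

lemma smooth_real_coinduct:
  assumes "F \<in> X" and step: "\<forall>G\<in>X. \<exists>G'\<in>X. \<forall>t. (G has_real_derivative G' t) (at t)"
  shows "F \<in> smooth_real"
proof -
  define st where "st G = (SOME G'. G' \<in> X \<and> (\<forall>t. (G has_real_derivative G' t) (at t)))" for G
  have st: "st G \<in> X \<and> (\<forall>t. (G has_real_derivative st G t) (at t))" if "G \<in> X" for G
  proof -
    have "\<exists>G'. G' \<in> X \<and> (\<forall>t. (G has_real_derivative G' t) (at t))" using step that by (simp add: Bex_def)
    then show ?thesis unfolding st_def by (rule someI_ex)
  qed
  define H where "H k = (st ^^ k) F" for k
  have HX: "H k \<in> X" for k
  proof (induction k)
    case 0 then show ?case using assms(1) by (simp add: H_def)
  next
    case (Suc k) then show ?case using st[of "H k"] by (simp add: H_def)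
  qed
  have "(H k has_real_derivative H (Suc k) t) (at t)" for k t
    using st[OF HX[of k]] by (simp add: H_def)
  then show ?thesis unfolding smooth_real_def by (intro CollectI exI[of _ H]) (simp add: H_def)
qed

lemma smooth_real_deriv:
  assumes "F \<in> smooth_real" shows "\<exists>F'\<in>smooth_real. \<forall>t. (F has_real_derivative F' t) (at t)"
proof -
  obtain H where H: "H 0 = F" "\<And>k t. (H k has_real_derivative H (Suc k) t) (at t)"
    using assms unfolding smooth_real_def by blast
  have "H 1 \<in> smooth_real" unfolding smooth_real_def
    by (intro CollectI exI[of _ "\<lambda>k. H (Suc k)"]) (simp add: H(2))
  moreover have "\<forall>t. (F has_real_derivative H 1 t) (at t)"
    using H(2)[of 0] unfolding H(1) by simp
  ultimately show ?thesis by (intro bexI[of _ "H 1"])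
qed

lemma smooth_real_isCont: assumes "F \<in> smooth_real" shows "isCont F t"
proof -
  obtain F' where "\<forall>t. (F has_real_derivative F' t) (at t)" using smooth_real_deriv[OF assms] by blast
  then show ?thesis using DERIV_isCont by blast
qed

inductive_set arith_closure :: "(real \<Rightarrow> real) set \<Rightarrow> (real \<Rightarrow> real) set" for B where
  gen: "F \<in> B \<Longrightarrow> F \<in> arith_closure B"
| const: "(\<lambda>t. c) \<in> arith_closure B"
| add: "F \<in> arith_closure B \<Longrightarrow> G \<in> arith_closure B \<Longrightarrow> (\<lambda>t. F t + G t) \<in> arith_closure B"
| mult: "F \<in> arith_closure B \<Longrightarrow> G \<in> arith_closure B \<Longrightarrow> (\<lambda>t. F t * G t) \<in> arith_closure B"

text \<open>By the sum and product rules the derivatives of members of \<open>arith_closure B\<close> stay in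
  \<open>arith_closure B\<close>, so coinduction applies.\<close>
lemma arith_closure_subset_smooth_real:
  assumes B: "\<forall>F\<in>B. \<exists>F'\<in>arith_closure B. \<forall>t. (F has_real_derivative F' t) (at t)"
  shows "arith_closure B \<subseteq> smooth_real"
proof -
  have *: "\<exists>F'\<in>arith_closure B. \<forall>t. (F has_real_derivative F' t) (at t)" if "F \<in> arith_closure B" for F
    using that
  proof (induction rule: arith_closure.induct)
    case (gen F) show ?case by (rule bspec[OF B gen])
  next
    case (const c) then show ?case by (intro bexI[of _ "\<lambda>t. 0"]) (auto intro: arith_closure.const)
  next
    case (add F G)
    then obtain F' G' where "F' \<in> arith_closure B" "G' \<in> arith_closure B"
      "\<forall>t. (F has_real_derivative F' t) (at t)" "\<forall>t. (G has_real_derivative G' t) (at t)" by blast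
    note d = this
    have "(\<lambda>t. F' t + G' t) \<in> arith_closure B" by (rule arith_closure.add[OF d(1) d(2)])
    moreover have "((\<lambda>t. F t + G t) has_real_derivative F' t + G' t) (at t)" for t
      using DERIV_add[OF d(3)[rule_format, of t] d(4)[rule_format, of t]] by simp
    ultimately show ?case by (intro bexI[of _ "\<lambda>t. F' t + G' t"] allI)
  next
    case (mult F G)
    then obtain F' G' where "F' \<in> arith_closure B" "G' \<in> arith_closure B"
      "\<forall>t. (F has_real_derivative F' t) (at t)" "\<forall>t. (G has_real_derivative G' t) (at t)" by blast
    note d = this
    have "(\<lambda>t. F' t * G t + F t * G' t) \<in> arith_closure B"
      by (rule arith_closure.add[OF arith_closure.mult[OF d(1) mult.hyps(2)] arith_closure.mult[OF mult.hyps(1) d(2)]])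
    moreover have "((\<lambda>t. F t * G t) has_real_derivative F' t * G t + F t * G' t) (at t)" for t
      using DERIV_mult[OF d(3)[rule_format, of t] d(4)[rule_format, of t]] by (simp add: mult.commute)
    ultimately show ?case by (intro bexI[of _ "\<lambda>t. F' t * G t + F t * G' t"] allI)
  qed
  show ?thesis
  proof
    fix F assume "F \<in> arith_closure B"
    show "F \<in> smooth_real" by (rule smooth_real_coinduct[of F "arith_closure B", OF \<open>F \<in> arith_closure B\<close>]) (rule ballI, erule *)
  qed
qed

lemma smooth_real_arith_closure:
  assumes "\<forall>F\<in>B. \<exists>F'\<in>arith_closure B. \<forall>t. (F has_real_derivative F' t) (at t)" "F \<in> arith_closure B"
  shows "F \<in> smooth_real"
  using arith_closure_subset_smooth_real[OF assms(1)] assms(2) by (rule subsetD)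

lemma smooth_real_deriv_in_closure: "\<forall>F\<in>smooth_real. \<exists>F'\<in>arith_closure smooth_real. \<forall>t. (F has_real_derivative F' t) (at t)"
proof
  fix F assume "F \<in> smooth_real"
  then obtain F' where "F' \<in> smooth_real" "\<forall>t. (F has_real_derivative F' t) (at t)"
    using smooth_real_deriv by blast
  then show "\<exists>F'\<in>arith_closure smooth_real. \<forall>t. (F has_real_derivative F' t) (at t)"
    by (intro bexI[of _ F'] arith_closure.gen)
qed

lemma smooth_real_mult: "F \<in> smooth_real \<Longrightarrow> G \<in> smooth_real \<Longrightarrow> (\<lambda>t. F t * G t) \<in> smooth_real"
  by (rule smooth_real_arith_closure[OF smooth_real_deriv_in_closure]) (intro arith_closure.mult arith_closure.add arith_closure.gen)

lemma smooth_real_add: "F \<in> smooth_real \<Longrightarrow> G \<in> smooth_real \<Longrightarrow> (\<lambda>t. F t + G t) \<in> smooth_real"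
  by (rule smooth_real_arith_closure[OF smooth_real_deriv_in_closure]) (intro arith_closure.mult arith_closure.add arith_closure.gen)

lemma smooth_real_inverse:
  assumes G: "G \<in> smooth_real" and pos: "\<forall>t. G t > 0"
  shows "(\<lambda>t. inverse (G t)) \<in> smooth_real"
proof -
  let ?B = "smooth_real \<union> {\<lambda>t. inverse (G t)}"
  have "\<forall>F\<in>?B. \<exists>F'\<in>arith_closure ?B. \<forall>t. (F has_real_derivative F' t) (at t)"
  proof
    fix F assume "F \<in> ?B"
    then show "\<exists>F'\<in>arith_closure ?B. \<forall>t. (F has_real_derivative F' t) (at t)"
    proof
      assume "F \<in> smooth_real" then show ?thesis using smooth_real_deriv arith_closure.gen by (metis UnI1)
    next
      assume F: "F \<in> {\<lambda>t. inverse (G t)}"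
      obtain G' where G': "G' \<in> smooth_real" "\<forall>t. (G has_real_derivative G' t) (at t)"
        using smooth_real_deriv[OF G] by blast
      have "(\<lambda>t. (-1) * G' t * (inverse (G t) * inverse (G t))) \<in> arith_closure ?B"
        using G' by (intro arith_closure.mult arith_closure.const arith_closure.gen) auto
      moreover have "(F has_real_derivative (-1) * G' t * (inverse (G t) * inverse (G t))) (at t)" for t
        using F G' pos[rule_format, of t]
        by (auto intro!: derivative_eq_intros simp: power2_eq_square field_simps)
      ultimately show ?thesis by (intro bexI[of _ "\<lambda>t. (-1) * G' t * (inverse (G t) * inverse (G t))"]) auto
    qed
  qed
  moreover have "(\<lambda>t. inverse (G t)) \<in> arith_closure ?B" by (rule arith_closure.gen) simp
  ultimately show ?thesis by (rule smooth_real_arith_closure)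
qed

lemma smooth_real_affine:
  assumes "F \<in> smooth_real" shows "(\<lambda>t. F (a * t + b)) \<in> smooth_real"
proof -
  let ?X = "{G. \<exists>c F. F \<in> smooth_real \<and> G = (\<lambda>t. c * F (a * t + b))}"
  have "(\<lambda>t. F (a * t + b)) \<in> ?X" using assms by (auto intro!: exI[of _ 1])
  moreover have "\<forall>G\<in>?X. \<exists>G'\<in>?X. \<forall>t. (G has_real_derivative G' t) (at t)"
  proof
    fix G assume "G \<in> ?X"
    then obtain c F where F: "F \<in> smooth_real" "G = (\<lambda>t. c * F (a * t + b))" by blast
    obtain F' where F': "F' \<in> smooth_real" "\<forall>t. (F has_real_derivative F' t) (at t)"
      using smooth_real_deriv[OF F(1)] by blast
    have "(G has_real_derivative (c * a) * F' (a * t + b)) (at t)" for t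
    proof -
      have "((\<lambda>t. F (a * t + b)) has_real_derivative F' (a * t + b) * a) (at t)"
        by (rule DERIV_chain2[OF F'(2)[rule_format]]) (auto intro!: derivative_eq_intros)
      from DERIV_cmult[OF this, of c] show ?thesis unfolding F(2) by (simp add: mult_ac)
    qed
    then show "\<exists>G'\<in>?X. \<forall>t. (G has_real_derivative G' t) (at t)"
      using F' by (intro bexI[of _ "\<lambda>t. (c * a) * F' (a * t + b)"]) auto
  qed
  ultimately show ?thesis by (rule smooth_real_coinduct)
qed

text \<open>Every derivative of \<open>t \<mapsto> exp (-1/t)\<close> (extended by 0) has this form.\<close>
definition exp_inv_poly :: "real poly \<Rightarrow> real \<Rightarrow> real" where
  "exp_inv_poly P t = (if t > 0 then poly P (1 / t) * exp (- (1 / t)) else 0)"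

lemma poly_times_exp_neg_tendsto_0: "((\<lambda>x. poly P x * exp (- x)) \<longlongrightarrow> (0::real)) at_top"
proof -
  have eq: "(\<lambda>x. poly P x * exp (- x)) = (\<lambda>x. \<Sum>i\<le>degree P. coeff P i * (x ^ i / exp x))"
    by (simp add: poly_altdef sum_distrib_right exp_minus divide_inverse mult.assoc)
  show ?thesis unfolding eq
    by (intro tendsto_null_sum tendsto_mult_right_zero tendsto_power_div_exp_0)
qed

lemma exp_inv_poly_over_t_tendsto_0: "((\<lambda>h. exp_inv_poly P h / h) \<longlongrightarrow> 0) (at_right 0)"
proof -
  have lim: "((\<lambda>h. poly (pCons 0 P) (inverse h) * exp (- inverse h)) \<longlongrightarrow> 0) (at_right (0::real))"
    by (rule filterlim_compose[OF poly_times_exp_neg_tendsto_0 filterlim_inverse_at_top_right])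
  have ev: "\<forall>\<^sub>F h in at_right (0::real). poly (pCons 0 P) (inverse h) * exp (- inverse h) = exp_inv_poly P h / h"
    using eventually_at_right_less[of "0::real"]
    by eventually_elim (simp add: exp_inv_poly_def field_simps)
  show ?thesis using tendsto_cong[OF ev] lim by simp
qed

lemma exp_inv_poly_has_derivative: "(exp_inv_poly P has_real_derivative exp_inv_poly ([:0,0,1:] * (P - pderiv P)) t) (at t)"
proof -
  consider "t > 0" | "t < 0" | "t = 0" by linarith
  then show ?thesis
  proof cases
    case 1
    have ev: "\<forall>\<^sub>F y in nhds t. exp_inv_poly P y = poly P (1 / y) * exp (- (1 / y))"
      using eventually_nhds_in_open[of "{0<..}" t] 1
      by (auto elim!: eventually_mono simp: exp_inv_poly_def)
    have "((\<lambda>y. poly P (1 / y) * exp (- (1 / y))) has_real_derivative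
        exp_inv_poly ([:0,0,1:] * (P - pderiv P)) t) (at t)"
      using 1
      by (auto intro!: derivative_eq_intros DERIV_chain2[OF poly_DERIV]
               simp: exp_inv_poly_def field_simps power2_eq_square)
    then show ?thesis using DERIV_cong_ev[OF refl ev refl] by simp
  next
    case 2
    have ev: "\<forall>\<^sub>F y in nhds t. exp_inv_poly P y = 0"
      using eventually_nhds_in_open[of "{..<0}" t] 2
      by (auto elim!: eventually_mono simp: exp_inv_poly_def)
    have "((\<lambda>y. 0) has_real_derivative exp_inv_poly ([:0,0,1:] * (P - pderiv P)) t) (at t)"
      using 2 by (simp add: exp_inv_poly_def)
    then show ?thesis using DERIV_cong_ev[OF refl ev refl] by simp
  next
    case 3
    have l: "((\<lambda>y. (exp_inv_poly P y - exp_inv_poly P 0) / (y - 0)) \<longlongrightarrow> 0) (at_left 0)"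
    proof -
      have ev: "\<forall>\<^sub>F h in at_left (0::real). 0 = (exp_inv_poly P h - exp_inv_poly P 0) / (h - 0)"
      proof -
        have "eventually (\<lambda>x. x \<in> {-1<..<0}) (at_left (0::real))"
          by (rule eventually_at_left_real) simp
        then show ?thesis by eventually_elim (simp add: exp_inv_poly_def)
      qed
      show ?thesis using tendsto_cong[OF ev, of 0] by simp
    qed
    have r: "((\<lambda>y. (exp_inv_poly P y - exp_inv_poly P 0) / (y - 0)) \<longlongrightarrow> 0) (at_right 0)"
      using exp_inv_poly_over_t_tendsto_0[of P] by (simp add: exp_inv_poly_def)
    have "((\<lambda>y. (exp_inv_poly P y - exp_inv_poly P 0) / (y - 0)) \<longlongrightarrow> 0) (at 0)"
      by (rule filterlim_split_at[OF l r])
    then have "(exp_inv_poly P has_real_derivative 0) (at 0)"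
      by (simp add: has_field_derivative_iff)
    then show ?thesis using 3 by (simp add: exp_inv_poly_def)
  qed
qed

lemma exp_inv_poly_smooth: "exp_inv_poly P \<in> smooth_real"
proof (rule smooth_real_coinduct[of _ "range exp_inv_poly"])
  show "exp_inv_poly P \<in> range exp_inv_poly" by simp
  show "\<forall>G\<in>range exp_inv_poly. \<exists>G'\<in>range exp_inv_poly. \<forall>t. (G has_real_derivative G' t) (at t)"
  proof
    fix G assume "G \<in> range exp_inv_poly"
    then obtain Q where G: "G = exp_inv_poly Q" by blast
    show "\<exists>G'\<in>range exp_inv_poly. \<forall>t. (G has_real_derivative G' t) (at t)"
      unfolding G by (intro bexI[of _ "exp_inv_poly ([:0,0,1:] * (Q - pderiv Q))"] allI exp_inv_poly_has_derivative) simp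
  qed
qed

definition exp_inv :: "real \<Rightarrow> real" where "exp_inv = exp_inv_poly 1"

lemma exp_inv_smooth: "exp_inv \<in> smooth_real" unfolding exp_inv_def by (rule exp_inv_poly_smooth)
lemma exp_inv_pos: "t > 0 \<Longrightarrow> exp_inv t > 0" by (simp add: exp_inv_def exp_inv_poly_def)
lemma exp_inv_zero: "t \<le> 0 \<Longrightarrow> exp_inv t = 0" by (simp add: exp_inv_def exp_inv_poly_def)
lemma exp_inv_nonneg: "exp_inv t \<ge> 0" by (simp add: exp_inv_def exp_inv_poly_def)

definition cutoff :: "real \<Rightarrow> real \<Rightarrow> real" where
  "cutoff c t = exp_inv (c - t) * inverse (exp_inv (c - t) + exp_inv (t - 1))"

lemma cutoff_smooth: assumes "c > 1" shows "cutoff c \<in> smooth_real"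
proof -
  have a: "(\<lambda>t. exp_inv (c - t)) \<in> smooth_real"
    using smooth_real_affine[OF exp_inv_smooth, of "-1" c] by simp
  have b: "(\<lambda>t. exp_inv (t - 1)) \<in> smooth_real"
    using smooth_real_affine[OF exp_inv_smooth, of 1 "-1"] by simp
  have pos: "\<forall>t. exp_inv (c - t) + exp_inv (t - 1) > 0"
  proof
    fix t
    show "exp_inv (c - t) + exp_inv (t - 1) > 0"
    proof (cases "t < c")
      case True then show ?thesis using exp_inv_pos[of "c - t"] exp_inv_nonneg[of "t - 1"] by simp
    next
      case False then show ?thesis using exp_inv_pos[of "t - 1"] exp_inv_nonneg[of "c - t"] assms by simp
    qed
  qed
  have "(\<lambda>t. exp_inv (c - t) * inverse (exp_inv (c - t) + exp_inv (t - 1))) \<in> smooth_real"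
    by (intro smooth_real_mult a smooth_real_inverse smooth_real_add b pos)
  then show ?thesis unfolding cutoff_def[abs_def] .
qed

lemma cutoff_eq_1: "t \<le> 1 \<Longrightarrow> c > 1 \<Longrightarrow> cutoff c t = 1"
  unfolding cutoff_def using exp_inv_zero[of "t - 1"] exp_inv_pos[of "c - t"] by simp

lemma cutoff_eq_0: "t \<ge> c \<Longrightarrow> cutoff c t = 0"
  unfolding cutoff_def using exp_inv_zero[of "c - t"] by simp

lemma cutoff_nonneg: "cutoff c t \<ge> 0"
  unfolding cutoff_def using exp_inv_nonneg[of "c - t"] exp_inv_nonneg[of "t - 1"] by simp

lemma cutoff_le_1: "cutoff c t \<le> 1"
proof -
  have "exp_inv (c - t) \<le> exp_inv (c - t) + exp_inv (t - 1)" using exp_inv_nonneg[of "t - 1"] by simp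
  then show ?thesis unfolding cutoff_def using exp_inv_nonneg[of "c - t"]
    by (cases "exp_inv (c - t) + exp_inv (t - 1) = 0") (auto simp: field_simps)
qed

section \<open>Elementary inequalities\<close>

text \<open>Split at \<open>Z = \<kappa>\<^sup>-\<^sup>1\<^sup>/\<^sup>(\<^sup>\<lambda>\<^sup>-\<^sup>1\<^sup>)\<close>, where \<open>\<kappa> Z\<^sup>\<lambda>\<^sup>-\<^sup>1 = 1\<close>.\<close>
lemma le_powr_plus_const:
  fixes Z \<kappa> lam :: real
  assumes Z: "Z \<ge> 0" and \<kappa>: "\<kappa> > 0" and lam: "lam > 1"
  shows "Z \<le> \<kappa> * Z powr lam + \<kappa> powr (- 1 / (lam - 1))"
proof (cases "Z \<le> \<kappa> powr (- 1 / (lam - 1))")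
  case True then show ?thesis using Z \<kappa> by (simp add: add_increasing)
next
  case False
  define T where "T = \<kappa> powr (- 1 / (lam - 1))"
  have T0: "T > 0" using \<kappa> by (simp add: T_def)
  have ZT: "Z > T" using False by (simp add: T_def)
  have ex: "- 1 / (lam - 1) * (lam - 1) = -1" using lam by simp
  have "T powr (lam - 1) = \<kappa> powr (-1)" unfolding T_def powr_powr ex ..
  then have "\<kappa> * T powr (lam - 1) = 1" using \<kappa> by (simp add: powr_minus)
  moreover have "T powr (lam - 1) < Z powr (lam - 1)" using ZT T0 lam by (intro powr_less_mono2) auto
  ultimately have "1 < \<kappa> * Z powr (lam - 1)" using \<kappa> by (metis mult_strict_left_mono)
  then have "Z < \<kappa> * Z powr (lam - 1) * Z" using ZT T0 by simp
  also have "\<dots> = \<kappa> * Z powr lam" using ZT T0 by (simp add: powr_diff field_simps)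
  finally have "Z < \<kappa> * Z powr lam" .
  moreover have "\<kappa> powr (- 1 / (lam - 1)) \<ge> 0" by simp
  ultimately show ?thesis by linarith
qed

lemma young_absorb:
  fixes a v p b c e lam :: real
  assumes a: "a \<ge> 0" and v: "v \<ge> 0" and p: "p \<ge> 0" and b: "b > 0" and c: "c > 0" and e: "e > 0"
    and lam: "lam > 1" and ab: "a powr lam * c \<le> b"
  shows "a * v * p powr (1 / lam) \<le> e * (b * v powr lam) * p + (e * c) powr (- 1 / (lam - 1))"
proof -
  define Z where "Z = a * v * p powr (1 / lam)"
  have "Z powr lam = a powr lam * v powr lam * p"
    using a v p lam by (simp add: Z_def powr_mult powr_powr)
  then have "e * c * Z powr lam = e * (a powr lam * c) * v powr lam * p" by (simp add: mult_ac)
  also have "\<dots> \<le> e * b * v powr lam * p"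
    using ab e v p by (intro mult_right_mono mult_left_mono) auto
  finally have "e * c * Z powr lam \<le> e * (b * v powr lam) * p" by (simp add: mult_ac)
  moreover have "Z \<le> e * c * Z powr lam + (e * c) powr (- 1 / (lam - 1))"
    using a v p e c lam by (intro le_powr_plus_const) (simp_all add: Z_def)
  ultimately show ?thesis unfolding Z_def by linarith
qed

text \<open>Both bounds come from choosing \<open>e\<close> in the family of estimates \<open>H\<close>: a fixed \<open>e = 1/(2k)\<close>
  absorbs the \<open>I\<close>-term into \<open>L\<close>, while \<open>e\<close> proportional to \<open>(W/J)\<^sup>\<lambda>\<^sup>-\<^sup>1\<close> makes the second
  term equal to \<open>J/2\<close>.\<close>
lemma absorbed_bound_powr_lam_minus_1:
  fixes k W c lam J L I :: real
  assumes k: "k > 0" and W: "W > 0" and c: "c > 0" and lam: "lam > 1"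
    and J: "J \<ge> 0" and JL: "J \<le> L" and IL: "I \<le> L"
    and H: "\<And>e. e > 0 \<Longrightarrow> L \<le> k * e * I + k * (e * c) powr (- 1 / (lam - 1)) * W"
  shows "c * J powr (lam - 1) \<le> (2 * k) powr lam * W powr (lam - 1)"
proof (cases "J = 0")
  case True
  then show ?thesis using lam k W by simp
next
  case False
  then have Jp: "J > 0" using J by simp
  define q where "q = 1 / (lam - 1)"
  have qlam: "q * (lam - 1) = 1" using lam by (simp add: q_def)
  have "L \<le> k * (1 / (2 * k)) * I + k * ((1 / (2 * k)) * c) powr (- q) * W"
    using H[of "1 / (2 * k)"] k by (simp add: q_def)
  also have "((1 / (2 * k)) * c) powr (- q) = (2 * k / c) powr q"
    using k c by (simp add: powr_minus_divide powr_divide divide_simps)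
  finally have "L \<le> I / 2 + k * (2 * k / c) powr q * W" using k by simp
  then have "J \<le> 2 * k * (2 * k / c) powr q * W" using JL IL by simp
  then have "J powr (lam - 1) \<le> (2 * k * (2 * k / c) powr q * W) powr (lam - 1)"
    using Jp lam by (intro powr_mono2) auto
  also have "\<dots> = (2 * k) powr (lam - 1) * ((2 * k / c) powr q) powr (lam - 1) * W powr (lam - 1)"
    using k c W by (simp add: powr_mult)
  also have "((2 * k / c) powr q) powr (lam - 1) = 2 * k / c"
    using k c by (simp add: powr_powr qlam)
  finally have "J powr (lam - 1) \<le> (2 * k) powr (lam - 1) * (2 * k / c) * W powr (lam - 1)" .
  then have "c * J powr (lam - 1) \<le> c * ((2 * k) powr (lam - 1) * (2 * k / c) * W powr (lam - 1))"
    by (rule mult_left_mono) (use c in auto)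
  also have "\<dots> = (2 * k) powr (lam - 1) * (2 * k) * W powr (lam - 1)" using c by simp
  also have "(2 * k) powr (lam - 1) * (2 * k) = (2 * k) powr lam"
    using k by (simp add: powr_diff)
  finally show ?thesis by simp
qed

lemma absorbed_bound_powr_lam:
  fixes k W c lam J L I D :: real
  assumes k: "k > 0" and W: "W > 0" and c: "c > 0" and lam: "lam > 1"
    and Jp: "J > 0" and JL: "J \<le> L" and ID: "I \<le> D"
    and H: "\<And>e. e > 0 \<Longrightarrow> L \<le> k * e * I + k * (e * c) powr (- 1 / (lam - 1)) * W"
  shows "c * J powr lam \<le> (2 * k) powr lam * W powr (lam - 1) * D"
proof -
  define e where "e = (2 * k * W / J) powr (lam - 1) / c"
  have e: "e > 0" using k W Jp c by (simp add: e_def)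
  have ec: "e * c = (2 * k * W / J) powr (lam - 1)" using c by (simp add: e_def)
  have ex: "(lam - 1) * (- 1 / (lam - 1)) = -1" using lam by simp
  have "(e * c) powr (- 1 / (lam - 1)) = (2 * k * W / J) powr (-1)"
    unfolding ec powr_powr ex ..
  also have "\<dots> = J / (2 * k * W)" using k W Jp by (simp add: powr_minus_divide)
  finally have ecq: "(e * c) powr (- 1 / (lam - 1)) = J / (2 * k * W)" .
  have "L \<le> k * e * I + k * (e * c) powr (- 1 / (lam - 1)) * W" using H[OF e] .
  also have "k * (e * c) powr (- 1 / (lam - 1)) * W = J / 2" unfolding ecq using k W by simp
  finally have L1: "L \<le> k * e * I + J / 2" .
  have "k * e * I \<le> k * e * D" using ID k e by (intro mult_left_mono) auto
  then have JD: "J / 2 \<le> k * e * D" using JL L1 by linarith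
  have "c * J \<le> c * (2 * k * e * D)" using JD c by (intro mult_left_mono) auto
  also have "c * (2 * k * e * D) = (2 * k) * (e * c) * D" by (simp add: mult_ac)
  also have "\<dots> = (2 * k) * ((2 * k) powr (lam - 1) * W powr (lam - 1) / J powr (lam - 1)) * D"
    unfolding ec using k W Jp by (simp add: powr_mult powr_divide)
  finally have fin: "c * J * J powr (lam - 1) \<le> (2 * k) * (2 * k) powr (lam - 1) * W powr (lam - 1) * D"
    using Jp by (simp add: pos_le_divide_eq)
  have e1: "J * J powr (lam - 1) = J powr lam" using Jp by (simp add: powr_diff)
  have e2: "(2 * k) * (2 * k) powr (lam - 1) = (2 * k) powr lam" using k by (simp add: powr_diff)
  have "c * J powr lam = c * J * J powr (lam - 1)" unfolding e1[symmetric] by (simp add: mult.assoc)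
  also have "\<dots> \<le> (2 * k) * (2 * k) powr (lam - 1) * W powr (lam - 1) * D" by (rule fin)
  also have "\<dots> = (2 * k) powr lam * W powr (lam - 1) * D" unfolding e2 ..
  finally show ?thesis .
qed

lemma powr_decrement_near:
  fixes x y lam :: real
  assumes x: "x > 0" and xy: "x \<le> y" "y \<le> 2 * x" and lam: "lam > 1"
  shows "(y - x) * x powr (- lam) \<le> 2 powr lam / (lam - 1) * (x powr (1 - lam) - y powr (1 - lam))"
proof (cases "x = y")
  case False
  define g where "g t = t powr (1 - lam)" for t :: real
  have der: "(g has_real_derivative (1 - lam) * t powr (- lam)) (at t)" if "x \<le> t" "t \<le> y" for t
    using has_real_derivative_powr[of t "1 - lam"] x that unfolding g_def by simp
  have xy': "x < y" using xy False by simp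
  obtain z where z: "x < z" "z < y" "g y - g x = (y - x) * ((1 - lam) * z powr (- lam))"
    using MVT2[OF xy' der] by blast
  have "z powr (- lam) \<ge> y powr (- lam)" using z x lam by (intro powr_mono2') auto
  moreover have "y powr (- lam) \<ge> (2 * x) powr (- lam)" using xy x lam by (intro powr_mono2') auto
  moreover have "(2 * x) powr (- lam) = x powr (- lam) / 2 powr lam"
    using x by (simp add: powr_mult powr_minus divide_simps)
  ultimately have zb: "z powr (- lam) \<ge> x powr (- lam) / 2 powr lam" by simp
  have gxy: "g x - g y = (y - x) * (lam - 1) * z powr (- lam)" using z(3) by (simp add: algebra_simps)
  have "(y - x) * (lam - 1) * (x powr (- lam) / 2 powr lam) \<le> g x - g y"
    unfolding gxy using xy lam zb by (intro mult_left_mono) auto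
  then have "(y - x) * x powr (- lam) \<le> 2 powr lam / (lam - 1) * (g x - g y)"
    using lam by (simp add: field_simps)
  then show ?thesis by (simp add: g_def)
qed simp

lemma powr_decrement_far:
  fixes x y lam :: real
  assumes x: "x > 0" and xy: "2 * x \<le> y" and lam: "lam > 1"
  shows "x powr (1 - lam) \<le> 1 / (1 - 2 powr (1 - lam)) * (x powr (1 - lam) - y powr (1 - lam))"
proof -
  have two: "2 powr (1 - lam) < 1" using lam by (simp add: powr_less_one)
  have "y powr (1 - lam) \<le> (2 * x) powr (1 - lam)" using x xy lam by (intro powr_mono2') auto
  also have "\<dots> = 2 powr (1 - lam) * x powr (1 - lam)" using x by (simp add: powr_mult)
  finally have "x powr (1 - lam) * (1 - 2 powr (1 - lam)) \<le> x powr (1 - lam) - y powr (1 - lam)"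
    by (simp add: algebra_simps)
  then show ?thesis using two by (simp add: field_simps)
qed

lemma powr_telescope_bound:
  fixes x y P C lam :: real
  assumes x: "x > 0" and xy: "x \<le> y" and lam: "lam > 1" and C: "C \<ge> 0"
    and h1: "P * x powr (lam - 1) \<le> C" and h2: "P * x powr lam \<le> C * (y - x)"
  shows "P \<le> C * (2 powr lam / (lam - 1) + 1 / (1 - 2 powr (1 - lam))) * (x powr (1 - lam) - y powr (1 - lam))"
proof -
  define K1 where "K1 = 2 powr lam / (lam - 1)"
  define K2 where "K2 = 1 / (1 - 2 powr (1 - lam))"
  define \<Delta> where "\<Delta> = x powr (1 - lam) - y powr (1 - lam)"
  have K: "K1 > 0" "K2 > 0" using lam by (simp_all add: K1_def K2_def powr_less_one)
  have "y powr (1 - lam) \<le> x powr (1 - lam)" using x xy lam by (intro powr_mono2') auto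
  then have C\<Delta>: "C * \<Delta> \<ge> 0" using C by (simp add: \<Delta>_def)
  have "P \<le> C * (K1 * \<Delta>) \<or> P \<le> C * (K2 * \<Delta>)"
  proof (cases "y \<le> 2 * x")
    case True
    have "P * x powr lam * x powr (- lam) \<le> C * (y - x) * x powr (- lam)"
      using h2 x by (intro mult_right_mono) auto
    then have "P \<le> C * ((y - x) * x powr (- lam))" using x by (simp add: powr_minus field_simps)
    also have "\<dots> \<le> C * (K1 * \<Delta>)"
      using powr_decrement_near[OF x xy True lam] C by (intro mult_left_mono) (simp_all add: K1_def \<Delta>_def)
    finally show ?thesis ..
  next
    case False
    have "P * x powr (lam - 1) * x powr (1 - lam) \<le> C * x powr (1 - lam)"
      using h1 x by (intro mult_right_mono) auto
    moreover have "x powr (lam - 1) * x powr (1 - lam) = 1" using x by (simp add: powr_add[symmetric])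
    ultimately have "P \<le> C * x powr (1 - lam)" by (simp add: mult.assoc)
    also have "\<dots> \<le> C * (K2 * \<Delta>)"
      using powr_decrement_far[OF x _ lam] False C by (intro mult_left_mono) (simp_all add: K2_def \<Delta>_def)
    finally show ?thesis ..
  qed
  moreover have "C * (K1 + K2) * \<Delta> = C * (K1 * \<Delta>) + K2 * (C * \<Delta>)"
    and "C * (K1 + K2) * \<Delta> = C * (K2 * \<Delta>) + K1 * (C * \<Delta>)" by (simp_all add: algebra_simps)
  moreover have "K2 * (C * \<Delta>) \<ge> 0" and "K1 * (C * \<Delta>) \<ge> 0" using C\<Delta> K by simp_all
  ultimately have "P \<le> C * (K1 + K2) * \<Delta>" by linarith
  then show ?thesis by (simp add: K1_def K2_def \<Delta>_def)
qed
lemma suminf_telescope_bound_finite: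
  fixes t :: "nat \<Rightarrow> ennreal" and y G :: "nat \<Rightarrow> real"
  assumes t: "\<And>k. t k \<le> ennreal (y k + (G k - G (Suc k)))"
    and y: "\<And>k. y k \<ge> 0" "\<And>k. k \<ge> N \<Longrightarrow> y k = 0"
    and G: "\<And>k. G (Suc k) \<le> G k" "\<And>k. G k \<ge> 0"
  shows "(\<Sum>k. t k) < \<infinity>"
proof -
  define Y where "Y k = y k + (G k - G (Suc k))" for k
  have Y0: "Y k \<ge> 0" for k using y(1)[of k] G(1)[of k] by (simp add: Y_def)
  have "summable Y"
  proof (rule summableI_nonneg_bounded[OF Y0])
    fix n
    have "(\<Sum>i<n. Y i) = (\<Sum>i<n. y i) + (G 0 - G n)"
      by (simp add: Y_def sum.distrib sum_lessThan_telescope')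
    also have "(\<Sum>i<n. y i) = (\<Sum>i\<in>{..<n} \<inter> {..<N}. y i)"
      using y(2) by (intro sum.mono_neutral_right) (auto, metis leI)
    also have "\<dots> \<le> (\<Sum>i<N. y i)" by (rule sum_mono2) (auto simp: y(1))
    finally show "(\<Sum>i<n. Y i) \<le> (\<Sum>i<N. y i) + G 0" using G(2)[of n] by simp
  qed
  have "(\<Sum>k. t k) \<le> (\<Sum>k. ennreal (Y k))" by (rule suminf_le[OF t[folded Y_def]]) auto
  also have "\<dots> = ennreal (\<Sum>k. Y k)" by (rule suminf_ennreal2[OF Y0 \<open>summable Y\<close>])
  finally show ?thesis by (simp add: le_less_trans)
qed

section \<open>Shells and essential infima\<close>

definition shell :: "real \<Rightarrow> real \<Rightarrow> (real^'n::finite) set" where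
  "shell r R = cball 0 R - cball 0 r"

lemma shell_sets [measurable]: "shell r R \<in> sets borel"
  unfolding shell_def by (intro sets.Diff borel_closed) simp_all

lemma measure_shell_le:
  assumes R: "R > 0"
  shows "measure lborel (shell r R :: (real^'n::finite) set) \<le> measure lborel (ball (0::real^'n) 1) * R ^ CARD('n)"
proof -
  have fin: "emeasure lborel (cball (0::real^'n) R) < \<infinity>" by (rule emeasure_lborel_cball_finite)
  have "measure lborel (shell r R :: (real^'n) set) \<le> measure lborel (cball (0::real^'n) R)"
    using fin by (intro measure_mono_fmeasurable) (auto simp: shell_def fmeasurable_def)
  also have "\<dots> = measure lborel (ball (0::real^'n) R)" by (rule content_cball_conv_ball)
  also have "\<dots> = R ^ CARD('n) * measure lborel (ball (0::real^'n) 1)"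
    using R by (subst content_ball_conv_unit_ball) auto
  finally show ?thesis by (simp add: mult.commute)
qed

lemma shell_not_null:
  assumes r: "0 \<le> r" and rR: "r < R"
  shows "\<not> (AE x in lborel. x \<notin> (shell r R :: (real^'n::finite) set))"
proof
  assume ae: "AE x in lborel. x \<notin> (shell r R :: (real^'n) set)"
  define z :: "real^'n" where "z = ((r + R) / 2) *\<^sub>R axis undefined 1"
  define \<rho> where "\<rho> = (R - r) / 2"
  have \<rho>: "\<rho> > 0" using rR by (simp add: \<rho>_def)
  have nz: "norm z = (r + R) / 2" using r rR by (simp add: z_def)
  have sub: "ball z \<rho> \<subseteq> shell r R"
  proof
    fix y assume "y \<in> ball z \<rho>"
    then have d: "norm (y - z) < \<rho>" by (simp add: dist_norm norm_minus_commute)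
    have "norm y \<le> norm z + norm (y - z)" by (metis add.commute diff_add_cancel norm_triangle_ineq)
    moreover have "norm z \<le> norm y + norm (y - z)"
      by (metis diff_add_cancel norm_minus_commute norm_triangle_ineq add.commute)
    ultimately show "y \<in> shell r R" using d nz by (simp add: shell_def \<rho>_def field_simps)
  qed
  have "emeasure lborel (shell r R :: (real^'n) set) = 0"
    using ae shell_sets[of r R] by (subst (asm) AE_iff_measurable) auto
  moreover have "emeasure lborel (ball z \<rho>) \<le> emeasure lborel (shell r R :: (real^'n) set)"
    using shell_sets[of r R] by (intro emeasure_mono[OF sub]) simp
  ultimately have "emeasure lborel (ball z \<rho>) = 0" by simp
  then show False using content_ball_pos[OF \<rho>, of z] by (simp add: measure_def)
qed

lemma ess_inf_on_antimono: "T \<subseteq> S \<Longrightarrow> ess_inf_on S f \<le> ess_inf_on T f"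
  unfolding ess_inf_on_def by (rule Sup_subset_mono) (auto elim!: AE_mp)

text \<open>Only positive lower bounds need to be tested; the non-null set excludes the bound \<open>\<infinity>\<close>.\<close>
lemma ess_inf_on_le_ereal:
  assumes S: "\<not> (AE x in lborel. x \<notin> S)" and B: "B \<ge> 0"
    and le: "\<And>c. c > 0 \<Longrightarrow> (AE x in lborel. x \<in> S \<longrightarrow> c \<le> f x) \<Longrightarrow> c \<le> B"
  shows "ess_inf_on S f \<le> ereal B"
  unfolding ess_inf_on_def
proof (rule Sup_least)
  fix c :: ereal assume "c \<in> {c. AE x in lborel. x \<in> S \<longrightarrow> c \<le> ereal (f x)}"
  then have cAE: "AE x in lborel. x \<in> S \<longrightarrow> c \<le> ereal (f x)" by simp
  show "c \<le> ereal B"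
  proof (cases c)
    case (real r)
    show ?thesis
    proof (cases "r > 0")
      case True then show ?thesis using le[of r] cAE real by simp
    qed (use B real in simp)
  next
    case PInf
    then have "AE x in lborel. x \<notin> S" using cAE by (auto elim!: AE_mp)
    then show ?thesis using S by simp
  qed simp
qed

lemma ess_inf_shell_bounded:
  fixes f :: "real^'n::finite \<Rightarrow> real"
  assumes f: "loc_ess_bounded f" and r: "0 \<le> r" and rR: "r < R"
  shows "\<exists>C. ess_inf_on (shell r R) f \<le> ereal C"
proof -
  obtain C where C: "AE x in lborel. x \<in> cball 0 R \<longrightarrow> \<bar>f x\<bar> \<le> C"
    using f unfolding loc_ess_bounded_def by (meson compact_cball)
  have "ess_inf_on (shell r R) f \<le> ereal (max 0 C)"
  proof (rule ess_inf_on_le_ereal[OF shell_not_null[OF r rR]])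
    fix c :: real assume "c > 0" and cAE: "AE x in lborel. x \<in> shell r R \<longrightarrow> c \<le> f x"
    show "c \<le> max 0 C"
    proof (rule ccontr)
      assume nc: "\<not> c \<le> max 0 C"
      have "AE x in lborel. x \<notin> (shell r R :: (real^'n) set)"
        using cAE C by eventually_elim (use nc in \<open>auto simp: shell_def\<close>)
      then show False using shell_not_null[OF r rR] by blast
    qed
  qed simp
  then show ?thesis by blast
qed

lemma power_interval:
  fixes th r :: real
  assumes th: "th > 1" and r: "r \<ge> 1"
  shows "\<exists>k. th ^ k \<le> r \<and> r < th ^ Suc k"
proof -
  obtain n where n: "r < th ^ n" using real_arch_pow[OF th] by blast
  define N where "N = (LEAST n. r < th ^ n)"
  have N: "r < th ^ N" unfolding N_def by (rule LeastI[of _ n]) (rule n)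
  have N0: "N \<noteq> 0" using N r by (intro notI) simp
  then obtain k where k: "N = Suc k" by (cases N) auto
  have "\<not> r < th ^ k" using not_less_Least[of k "\<lambda>n. r < th ^ n"] k by (simp add: N_def)
  then show ?thesis using N k by (intro exI[of _ k]) simp
qed

lemma nn_integral_geometric_partition:
  fixes g :: "real \<Rightarrow> ennreal" and th :: real
  assumes th: "th > 1" and g: "\<And>k r. th ^ k \<le> r \<Longrightarrow> r < th ^ Suc k \<Longrightarrow> g r \<le> a k"
  shows "(\<integral>\<^sup>+ r\<in>{1..}. g r \<partial>lborel) \<le> (\<Sum>k. a k * ennreal (th ^ Suc k - th ^ k))"
proof -
  define I where "I k = {th ^ k ..< th ^ Suc k}" for k
  have pw: "g r * indicator {1..} r \<le> (\<Sum>k. a k * indicator (I k) r)" for r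
  proof (cases "r \<ge> 1")
    case True
    obtain k where k: "th ^ k \<le> r" "r < th ^ Suc k" using power_interval[OF th True] by blast
    have "g r \<le> a k" by (rule g[OF k])
    also have "a k = (\<Sum>j\<in>{k}. a j * indicator (I j) r)" using k by (simp add: I_def)
    also have "\<dots> \<le> (\<Sum>j. a j * indicator (I j) r)" by (rule sum_le_suminf) auto
    finally show ?thesis using True by simp
  qed simp
  have "(\<integral>\<^sup>+ r\<in>{1..}. g r \<partial>lborel) \<le> (\<integral>\<^sup>+ r. (\<Sum>k. a k * indicator (I k) r) \<partial>lborel)"
    by (rule nn_integral_mono) (rule pw)
  also have "\<dots> = (\<Sum>k. \<integral>\<^sup>+ r. a k * indicator (I k) r \<partial>lborel)"
    by (rule nn_integral_suminf) (simp add: I_def)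
  also have "\<dots> = (\<Sum>k. a k * ennreal (th ^ Suc k - th ^ k))"
  proof -
    have "th ^ k \<le> th ^ Suc k" for k using th by simp
    then show ?thesis by (simp add: nn_integral_cmult_indicator I_def)
  qed
  finally show ?thesis .
qed

lemma powr_le_on_interval:
  fixes th r q t0 :: real
  assumes th: "th > 1" and t0: "t0 > 0" and r1: "t0 \<le> r" and r2: "r < th * t0"
  shows "r powr q \<le> th powr \<bar>q\<bar> * t0 powr q"
proof -
  define t where "t = r / t0"
  have t: "t \<ge> 1" "t \<le> th" using r1 r2 t0 by (auto simp: t_def field_simps)
  have rt: "r = t0 * t" using t0 by (simp add: t_def)
  have "t powr q \<le> th powr \<bar>q\<bar>"
  proof (cases "q \<ge> 0")
    case True
    then have "t powr q \<le> th powr q" using t by (intro powr_mono2) auto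
    then show ?thesis using True by simp
  next
    case False
    then have "t powr q \<le> t powr 0" using t by (intro powr_mono) auto
    also have "\<dots> = 1" using t by simp
    also have "1 \<le> th powr \<bar>q\<bar>" using th by (simp add: ge_one_powr_ge_zero)
    finally show ?thesis .
  qed
  then have "t0 powr q * t powr q \<le> t0 powr q * th powr \<bar>q\<bar>" by (intro mult_left_mono) auto
  then show ?thesis using t0 t by (simp add: rt powr_mult mult.commute)
qed

lemma shell_subset_ball_diff:
  assumes th: "th > 1" and t: "t > 0" and r: "t \<le> r" "r < th * t"
  shows "shell t (th * t) \<subseteq> ball (0::real^'n::finite) (th * th * r) - ball 0 (r / (th * th))"
proof
  fix x :: "real^'n" assume "x \<in> shell t (th * t)"
  then have x: "t < norm x" "norm x \<le> th * t" by (auto simp: shell_def)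
  have "th * t < th * th * t" using th t by simp
  also have "\<dots> \<le> th * th * r" using r th by simp
  finally have 1: "norm x < th * th * r" using x(2) by simp
  have "r / (th * th) < th * t / (th * th)" using r th by (intro divide_strict_right_mono) auto
  also have "\<dots> = t / th" using th by simp
  also have "\<dots> \<le> t" using th t by (simp add: divide_le_eq)
  finally have 2: "r / (th * th) < norm x" using x(1) by simp
  show "x \<in> ball 0 (th * th * r) - ball 0 (r / (th * th))" using 1 2 by simp
qed

section \<open>A smooth radial test function\<close>

inductive_set radial_algebra :: "(real^'n::finite \<Rightarrow> real) set" where
  gen: "G \<in> smooth_real \<Longrightarrow> (\<lambda>x. G (x \<bullet> x)) \<in> radial_algebra"
| coord: "(\<lambda>x. x $ i) \<in> radial_algebra"
| const: "(\<lambda>x. c) \<in> radial_algebra"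
| add: "F \<in> radial_algebra \<Longrightarrow> G \<in> radial_algebra \<Longrightarrow> (\<lambda>x. F x + G x) \<in> radial_algebra"
| mult: "F \<in> radial_algebra \<Longrightarrow> G \<in> radial_algebra \<Longrightarrow> (\<lambda>x. F x * G x) \<in> radial_algebra"

lemma inner_self_line_has_derivative:
  fixes x :: "real^'n::finite"
  shows "((\<lambda>t. (x + t *\<^sub>R axis i 1) \<bullet> (x + t *\<^sub>R axis i 1)) has_real_derivative 2 * x $ i) (at 0)"
proof -
  have eq: "(\<lambda>t. (x + t *\<^sub>R axis i 1) \<bullet> (x + t *\<^sub>R axis i 1)) = (\<lambda>t. x \<bullet> x + 2 * t * x $ i + t * t)"
    by (rule ext) (simp add: inner_add_left inner_add_right inner_axis inner_axis' inner_axis_axis algebra_simps)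
  show ?thesis unfolding eq by (auto intro!: derivative_eq_intros)
qed

lemma radial_algebra_line_derivative:
  fixes F :: "real^'n::finite \<Rightarrow> real"
  assumes "F \<in> radial_algebra"
  shows "\<exists>F'\<in>radial_algebra. \<forall>x. ((\<lambda>t. F (x + t *\<^sub>R axis i 1)) has_real_derivative F' x) (at 0)"
  using assms
proof (induction rule: radial_algebra.induct)
  case (gen G)
  obtain G' where G': "G' \<in> smooth_real" "\<forall>s. (G has_real_derivative G' s) (at s)"
    using smooth_real_deriv[OF gen] by blast
  have "((\<lambda>t. G ((x + t *\<^sub>R axis i 1) \<bullet> (x + t *\<^sub>R axis i 1))) has_real_derivative
      G' (x \<bullet> x) * (2 * x $ i)) (at 0)" for x :: "real^'n"
    using DERIV_chain2[OF G'(2)[rule_format, of "(x + 0 *\<^sub>R axis i 1) \<bullet> (x + 0 *\<^sub>R axis i 1)"]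
        inner_self_line_has_derivative[of x i]] by simp
  moreover have "(\<lambda>x::real^'n. G' (x \<bullet> x) * (2 * x $ i)) \<in> radial_algebra"
    by (intro radial_algebra.mult radial_algebra.gen G'(1) radial_algebra.const radial_algebra.coord)
  ultimately show ?case by (intro bexI[of _ "\<lambda>x::real^'n. G' (x \<bullet> x) * (2 * x $ i)"] allI)
next
  case (coord j)
  have "((\<lambda>t. (x + t *\<^sub>R axis i 1) $ j) has_real_derivative axis i 1 $ j) (at 0)" for x :: "real^'n"
    by (auto intro!: derivative_eq_intros)
  then show ?case by (intro bexI[of _ "\<lambda>x::real^'n. axis i 1 $ j"] allI radial_algebra.const)
next
  case (const c)
  then show ?case by (intro bexI[of _ "\<lambda>x::real^'n. 0"] allI radial_algebra.const) simp
next
  case (add F G)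
  then obtain F' G' where d: "F' \<in> radial_algebra" "G' \<in> radial_algebra"
      "\<forall>x. ((\<lambda>t. F (x + t *\<^sub>R axis i 1)) has_real_derivative F' x) (at 0)"
      "\<forall>x. ((\<lambda>t. G (x + t *\<^sub>R axis i 1)) has_real_derivative G' x) (at 0)" by blast
  have "((\<lambda>t. F (x + t *\<^sub>R axis i 1) + G (x + t *\<^sub>R axis i 1)) has_real_derivative F' x + G' x) (at 0)"
    for x using DERIV_add[OF d(3)[rule_format, of x] d(4)[rule_format, of x]] by simp
  then show ?case by (intro bexI[of _ "\<lambda>x. F' x + G' x"] allI radial_algebra.add d(1) d(2))
next
  case (mult F G)
  then obtain F' G' where d: "F' \<in> radial_algebra" "G' \<in> radial_algebra"
      "\<forall>x. ((\<lambda>t. F (x + t *\<^sub>R axis i 1)) has_real_derivative F' x) (at 0)"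
      "\<forall>x. ((\<lambda>t. G (x + t *\<^sub>R axis i 1)) has_real_derivative G' x) (at 0)" by blast
  have "((\<lambda>t. F (x + t *\<^sub>R axis i 1) * G (x + t *\<^sub>R axis i 1)) has_real_derivative F' x * G x + F x * G' x) (at 0)"
    for x using DERIV_mult[OF d(3)[rule_format, of x] d(4)[rule_format, of x]] by (simp add: mult.commute)
  moreover have "(\<lambda>x. F' x * G x + F x * G' x) \<in> radial_algebra"
    by (intro radial_algebra.add radial_algebra.mult d(1) d(2) mult.hyps)
  ultimately show ?case by (intro bexI[of _ "\<lambda>x. F' x * G x + F x * G' x"] allI)
qed

lemma radial_algebra_partial_dir:
  fixes F :: "real^'n::finite \<Rightarrow> real"
  assumes "F \<in> radial_algebra"
  shows "partial_dir i F \<in> radial_algebra"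
    and "((\<lambda>t. F (x + t *\<^sub>R axis i 1)) has_real_derivative partial_dir i F x) (at 0)"
proof -
  obtain F' where F': "F' \<in> radial_algebra" "\<forall>x. ((\<lambda>t. F (x + t *\<^sub>R axis i 1)) has_real_derivative F' x) (at 0)"
    using radial_algebra_line_derivative[OF assms, of i] by blast
  have eq: "partial_dir i F = F'"
    by (rule ext) (simp add: partial_dir_def DERIV_imp_deriv[OF F'(2)[rule_format]])
  show "partial_dir i F \<in> radial_algebra" using eq F' by simp
  show "((\<lambda>t. F (x + t *\<^sub>R axis i 1)) has_real_derivative partial_dir i F x) (at 0)"
    using eq F' by simp
qed

lemma radial_algebra_iter_partial: "F \<in> radial_algebra \<Longrightarrow> iter_partial is F \<in> radial_algebra"
  by (induction "is") (auto intro: radial_algebra_partial_dir)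

lemma radial_algebra_continuous:
  fixes F :: "real^'n::finite \<Rightarrow> real"
  assumes "F \<in> radial_algebra" shows "continuous_on UNIV F"
  using assms
proof (induction rule: radial_algebra.induct)
  case (gen G)
  have "continuous_on UNIV G" using smooth_real_isCont[OF gen] by (simp add: continuous_at_imp_continuous_on)
  then show ?case by (intro continuous_on_compose2[OF \<open>continuous_on UNIV G\<close>] continuous_intros) auto
qed (auto intro!: continuous_intros)

lemma radial_algebra_smooth_fun: "F \<in> radial_algebra \<Longrightarrow> smooth_fun F"
  unfolding smooth_fun_def
proof (intro allI conjI)
  fix "is" assume F: "F \<in> radial_algebra"
  show "continuous_on UNIV (iter_partial is F)" by (rule radial_algebra_continuous[OF radial_algebra_iter_partial[OF F]])
next
  fix "is" i x assume F: "F \<in> radial_algebra"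
  show "(\<lambda>t. iter_partial is F (x + t *\<^sub>R axis i 1)) differentiable at 0"
    using radial_algebra_partial_dir(2)[OF radial_algebra_iter_partial[OF F], where i=i and x=x] real_differentiable_def by blast
qed

lemma radial_algebra_scale:
  fixes F :: "real^'n::finite \<Rightarrow> real"
  assumes "F \<in> radial_algebra" shows "(\<lambda>x. F (c *\<^sub>R x)) \<in> radial_algebra"
  using assms
proof (induction rule: radial_algebra.induct)
  case (gen G)
  have "(\<lambda>s. G ((c * c) * s + 0)) \<in> smooth_real" by (rule smooth_real_affine[OF gen])
  then have "(\<lambda>x::real^'n. (\<lambda>s. G ((c * c) * s + 0)) (x \<bullet> x)) \<in> radial_algebra" by (rule radial_algebra.gen)
  then show ?case by (simp add: mult.assoc)
next
  case (coord i)
  have "(\<lambda>x::real^'n. c * x $ i) \<in> radial_algebra" by (intro radial_algebra.mult radial_algebra.const radial_algebra.coord)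
  then show ?case by simp
qed (auto intro: radial_algebra.intros)

lemma iter_partial_scale:
  fixes F :: "real^'n::finite \<Rightarrow> real"
  assumes F: "F \<in> radial_algebra"
  shows "iter_partial is (\<lambda>x. F (c *\<^sub>R x)) = (\<lambda>x. c ^ length is * iter_partial is F (c *\<^sub>R x))"
proof (induction "is")
  case Nil then show ?case by simp
next
  case (Cons i "is")
  let ?G = "iter_partial is F"
  have G: "?G \<in> radial_algebra" by (rule radial_algebra_iter_partial[OF F])
  have "partial_dir i (\<lambda>x. c ^ length is * ?G (c *\<^sub>R x)) x = c ^ Suc (length is) * partial_dir i ?G (c *\<^sub>R x)"
    for x
  proof -
    have d: "((\<lambda>s. ?G (c *\<^sub>R x + s *\<^sub>R axis i 1)) has_real_derivative partial_dir i ?G (c *\<^sub>R x)) (at (c * 0))"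
      using radial_algebra_partial_dir(2)[OF G, where i=i and x="c *\<^sub>R x"] by simp
    have "((\<lambda>t. (\<lambda>s. ?G (c *\<^sub>R x + s *\<^sub>R axis i 1)) (c * t)) has_real_derivative
        partial_dir i ?G (c *\<^sub>R x) * c) (at 0)"
      by (rule DERIV_chain2[where g="\<lambda>t. c * t" and x=0, OF d]) (auto intro!: derivative_eq_intros)
    from DERIV_cmult[OF this, of "c ^ length is"]
    have "((\<lambda>t. c ^ length is * ?G (c *\<^sub>R (x + t *\<^sub>R axis i 1))) has_real_derivative
        c ^ Suc (length is) * partial_dir i ?G (c *\<^sub>R x)) (at 0)"
      by (simp add: scaleR_add_right mult_ac)
    then show ?thesis unfolding partial_dir_def by (rule DERIV_imp_deriv)
  qed
  then show ?case using Cons by simp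
qed

lemma partial_dir_locally_const:
  fixes F :: "real^'n::finite \<Rightarrow> real"
  assumes U: "open U" "x \<in> U" and k: "\<forall>y\<in>U. F y = k"
  shows "partial_dir i F x = 0"
proof -
  have cont: "continuous (at 0) (\<lambda>t::real. x + t *\<^sub>R axis i 1)"
    by (intro continuous_intros)
  have op: "open ((\<lambda>t::real. x + t *\<^sub>R axis i 1) -` U)"
    by (intro continuous_open_vimage U(1)) (auto intro!: continuous_intros)
  have "\<forall>\<^sub>F t in nhds 0. t \<in> (\<lambda>t::real. x + t *\<^sub>R axis i 1) -` U"
    by (rule eventually_nhds_in_open[OF op]) (simp add: U(2))
  then have "\<forall>\<^sub>F t in nhds 0. x + t *\<^sub>R axis i 1 \<in> U" by simp
  then have ev: "\<forall>\<^sub>F t in nhds 0. F (x + t *\<^sub>R axis i 1) = k"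
    by eventually_elim (use k in auto)
  have "((\<lambda>t. k) has_real_derivative 0) (at 0)" by simp
  then have "((\<lambda>t. F (x + t *\<^sub>R axis i 1)) has_real_derivative 0) (at 0)"
    using DERIV_cong_ev[OF refl ev refl] by simp
  then show ?thesis unfolding partial_dir_def by (rule DERIV_imp_deriv)
qed

definition bump :: "real \<Rightarrow> real^'n::finite \<Rightarrow> real" where
  "bump th y = cutoff (th\<^sup>2) (y \<bullet> y)"

definition bump_pow :: "real \<Rightarrow> nat \<Rightarrow> real^'n::finite \<Rightarrow> real" where
  "bump_pow th s y = bump th y ^ s"

lemma radial_algebra_power: "F \<in> radial_algebra \<Longrightarrow> (\<lambda>x. F x ^ k) \<in> radial_algebra"
proof (induction k)
  case 0 then show ?case by (simp add: radial_algebra.const)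
next
  case (Suc k) then show ?case using radial_algebra.mult[OF Suc.prems Suc.IH[OF Suc.prems]] by simp
qed

lemma bump_radial_algebra: "th > 1 \<Longrightarrow> bump th \<in> radial_algebra"
proof -
  assume th: "th > 1"
  then have "th\<^sup>2 > 1" by (simp add: one_less_power)
  then show ?thesis unfolding bump_def[abs_def] by (intro radial_algebra.gen cutoff_smooth)
qed

lemma bump_pow_radial_algebra: "th > 1 \<Longrightarrow> bump_pow th s \<in> radial_algebra"
  unfolding bump_pow_def[abs_def] by (intro radial_algebra_power bump_radial_algebra)

lemma bump_nonneg: "bump th y \<ge> 0" by (simp add: bump_def cutoff_nonneg)
lemma bump_le_1: "bump th y \<le> 1" by (simp add: bump_def cutoff_le_1)

lemma bump_eq_1: assumes "th > 1" "norm y \<le> 1" shows "bump th y = 1"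
proof -
  have "y \<bullet> y \<le> 1" using assms(2) by (simp add: power2_norm_eq_inner[symmetric] power_le_one)
  moreover have "th\<^sup>2 > 1" using assms(1) by (simp add: one_less_power)
  ultimately show ?thesis by (simp add: bump_def cutoff_eq_1)
qed

lemma bump_eq_0: assumes "th > 0" "norm y \<ge> th" shows "bump th y = 0"
proof -
  have "th\<^sup>2 \<le> (norm y)\<^sup>2" using assms by (intro power_mono) auto
  then have "y \<bullet> y \<ge> th\<^sup>2" by (simp add: power2_norm_eq_inner)
  then show ?thesis by (simp add: bump_def cutoff_eq_0)
qed

text \<open>Differentiating \<open>bump\<^sup>s\<close> costs one power of \<open>bump\<close> per derivative; for large \<open>s\<close> the remaining
  factor gives the bound by \<open>bump_pow\<^sup>1\<^sup>/\<^sup>\<lambda>\<close>.\<close>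
lemma iter_partial_bump_pow_factor:
  fixes th :: real and s :: nat
  assumes th: "th > 1"
  shows "length is \<le> s \<Longrightarrow> \<exists>g\<in>(radial_algebra :: (real^'n::finite \<Rightarrow> real) set).
           iter_partial is (bump_pow th s) = (\<lambda>y. bump th y ^ (s - length is) * g y)"
proof (induction "is")
  case Nil
  have "(\<lambda>y::real^'n. 1) \<in> radial_algebra" by (rule radial_algebra.const)
  then show ?case by (intro bexI[of _ "\<lambda>y. 1"]) (auto simp: bump_pow_def[abs_def])
next
  case (Cons i "is")
  then obtain g where g: "g \<in> radial_algebra" "iter_partial is (bump_pow th s) = (\<lambda>y. bump th y ^ (s - length is) * g y)"
    by auto
  define j where "j = s - length is"
  have j: "j \<ge> 1" "s - length (i # is) = j - 1" using Cons.prems by (auto simp: j_def)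
  let ?e = "bump th :: real^'n \<Rightarrow> real"
  have e: "?e \<in> radial_algebra" by (rule bump_radial_algebra[OF th])
  define G where "G = (\<lambda>y. of_nat j * partial_dir i ?e y * g y + ?e y * partial_dir i g y)"
  have GM: "G \<in> radial_algebra" unfolding G_def
    by (intro radial_algebra.add radial_algebra.mult radial_algebra.const radial_algebra_partial_dir(1) e g(1))
  have "partial_dir i (\<lambda>y. ?e y ^ j * g y) y = ?e y ^ (j - 1) * G y" for y
  proof -
    have d1: "((\<lambda>t. ?e (y + t *\<^sub>R axis i 1)) has_real_derivative partial_dir i ?e y) (at 0)"
      by (rule radial_algebra_partial_dir(2)[OF e])
    have d2: "((\<lambda>t. g (y + t *\<^sub>R axis i 1)) has_real_derivative partial_dir i g y) (at 0)"
      by (rule radial_algebra_partial_dir(2)[OF g(1)])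
    have "((\<lambda>t. ?e (y + t *\<^sub>R axis i 1) ^ j * g (y + t *\<^sub>R axis i 1)) has_real_derivative
        (of_nat j * (partial_dir i ?e y * ?e y ^ (j - Suc 0))) * g y + partial_dir i g y * ?e y ^ j) (at 0)"
      using DERIV_mult[OF DERIV_power[OF d1, of j] d2] by simp
    moreover have "(of_nat j * (partial_dir i ?e y * ?e y ^ (j - Suc 0))) * g y + partial_dir i g y * ?e y ^ j
        = ?e y ^ (j - 1) * G y"
    proof -
      have "?e y ^ j = ?e y ^ (j - 1) * ?e y" using j(1)
        by (metis Suc_diff_le diff_Suc_1 le_add_diff_inverse power_Suc2 trans_le_add2 le_refl)
      then show ?thesis by (simp add: G_def algebra_simps)
    qed
    ultimately show ?thesis unfolding partial_dir_def by (intro DERIV_imp_deriv) simp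
  qed
  moreover have "iter_partial (i # is) (bump_pow th s) = partial_dir i (\<lambda>y. ?e y ^ j * g y)"
    using g(2) by (simp add: j_def)
  ultimately have "iter_partial (i # is) (bump_pow th s) = (\<lambda>y. ?e y ^ (s - length (i # is)) * G y)"
    using j(2) by (simp add: fun_eq_iff)
  then show ?case using GM by (intro bexI[of _ G])
qed

lemma power_le_powr_power:
  fixes e lam :: real and k s :: nat
  assumes e: "0 \<le> e" "e \<le> 1" and k: "k \<ge> 1" and lam: "lam > 0" and sk: "real s \<le> real k * lam"
  shows "e ^ k \<le> (e ^ s) powr (1 / lam)"
proof (cases "e = 0")
  case True then show ?thesis using k by (simp add: zero_power)
next
  case False
  then have "e ^ k = e powr (real k)" using e by (simp add: powr_realpow)
  also have "\<dots> \<le> e powr (real s / lam)"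
    using e False sk lam by (intro powr_mono') (auto simp: field_simps)
  also have "\<dots> = (e ^ s) powr (1 / lam)"
    using e False by (simp add: powr_realpow[symmetric] powr_powr)
  finally show ?thesis .
qed

lemma iter_partial_bump_pow_bound:
  fixes th lam :: real and s :: nat and "is" :: "'n::finite list"
  assumes th: "th > 1" and lam: "lam > 1" and len: "length is < s"
    and sl: "real s \<le> real (s - length is) * lam"
  shows "\<exists>M\<ge>0. \<forall>y::real^'n. \<bar>iter_partial is (bump_pow th s) y\<bar> \<le> M * bump_pow th s y powr (1 / lam)"
proof -
  obtain g where g: "g \<in> radial_algebra" "iter_partial is (bump_pow th s) = (\<lambda>y::real^'n. bump th y ^ (s - length is) * g y)"
    using iter_partial_bump_pow_factor[OF th, of "is" s] len by auto
  have "continuous_on (cball 0 th) g" using radial_algebra_continuous[OF g(1)] by (rule continuous_on_subset) simp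
  then have "compact (g ` cball 0 th)" by (intro compact_continuous_image) auto
  then obtain M where M: "M > 0" "\<forall>z\<in>g ` cball 0 th. norm z \<le> M"
    using compact_imp_bounded bounded_pos by metis
  show ?thesis
  proof (intro exI[of _ M] conjI allI)
    show "M \<ge> 0" using M by simp
    fix y :: "real^'n"
    have k: "s - length is \<ge> 1" using len by simp
    show "\<bar>iter_partial is (bump_pow th s) y\<bar> \<le> M * bump_pow th s y powr (1 / lam)"
    proof (cases "norm y \<ge> th")
      case True
      then have "bump th y = 0" using th by (intro bump_eq_0) auto
      then show ?thesis using g(2) k M by (simp add: zero_power)
    next
      case False
      then have gy: "\<bar>g y\<bar> \<le> M" using M by auto
      have e01: "0 \<le> bump th y" "bump th y \<le> 1" by (simp_all add: bump_nonneg bump_le_1)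
      have "bump th y ^ (s - length is) \<le> bump_pow th s y powr (1 / lam)"
        unfolding bump_pow_def using power_le_powr_power[OF e01 k _ sl] lam by simp
      then have "\<bar>g y\<bar> * bump th y ^ (s - length is) \<le> M * bump_pow th s y powr (1 / lam)"
        using gy e01 by (intro mult_mono) auto
      then show ?thesis using g(2) e01 by (simp add: abs_mult mult.commute)
    qed
  qed
qed

lemma iter_partial_bump_pow_inner:
  fixes th :: real and s :: nat and "is" :: "'n::finite list"
  assumes th: "th > 1" and ne: "is \<noteq> []" and y: "norm (y::real^'n) \<le> 1"
  shows "iter_partial is (bump_pow th s) y = 0"
proof -
  have ball: "\<forall>z\<in>ball (0::real^'n) 1. iter_partial is (bump_pow th s) z = 0" if "is \<noteq> []" for "is"
    using that
  proof (induction "is")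
    case Nil then show ?case by simp
  next
    case (Cons i "is")
    show ?case
    proof
      fix z :: "real^'n" assume z: "z \<in> ball 0 1"
      show "iter_partial (i # is) (bump_pow th s) z = 0"
      proof (cases "is = []")
        case True
        have "\<forall>w\<in>ball (0::real^'n) 1. bump_pow th s w = 1"
          using th by (auto simp: bump_pow_def bump_eq_1)
        then show ?thesis using True z by (simp, intro partial_dir_locally_const[where U="ball 0 1" and k=1]) auto
      next
        case False
        then show ?thesis using Cons.IH z by (simp, intro partial_dir_locally_const[where U="ball 0 1" and k=0]) auto
      qed
    qed
  qed
  have cl: "closed {z \<in> UNIV. iter_partial is (bump_pow th s) z = (0::real)}"
    by (intro continuous_closed_preimage_constant radial_algebra_continuous radial_algebra_iter_partial bump_pow_radial_algebra th) simp
  have "cball (0::real^'n) 1 \<subseteq> {z \<in> UNIV. iter_partial is (bump_pow th s) z = 0}"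
    using closure_minimal[OF _ cl, of "ball 0 1"] ball[OF ne] by auto
  then show ?thesis using y by auto
qed

definition scaled_bump :: "real \<Rightarrow> nat \<Rightarrow> real \<Rightarrow> real^'n::finite \<Rightarrow> real" where
  "scaled_bump th s R x = bump_pow th s ((1 / R) *\<^sub>R x)"

lemma bump_pow_nonneg: "bump_pow th s y \<ge> 0" by (simp add: bump_pow_def bump_nonneg)
lemma bump_pow_le_1: "bump_pow th s y \<le> 1" by (simp add: bump_pow_def bump_nonneg bump_le_1 power_le_one)

lemma scaled_bump_nonneg: "scaled_bump th s R x \<ge> 0" by (simp add: scaled_bump_def bump_pow_nonneg)
lemma scaled_bump_le_1: "scaled_bump th s R x \<le> 1" by (simp add: scaled_bump_def bump_pow_le_1)

lemma scaled_bump_eq_1: assumes "th > 1" "R > 0" "norm x \<le> R" shows "scaled_bump th s R x = 1"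
  using assms by (simp add: scaled_bump_def bump_pow_def bump_eq_1 field_simps)

lemma scaled_bump_eq_0: assumes "th > 1" "R > 0" "norm x \<ge> th * R" "s > 0" shows "scaled_bump th s R x = 0"
proof -
  have "norm ((1 / R) *\<^sub>R x) \<ge> th" using assms by (simp add: field_simps)
  then show ?thesis using assms by (simp add: scaled_bump_def bump_pow_def bump_eq_0 zero_power)
qed

lemma scaled_bump_test_fun:
  assumes th: "th > 1" and R: "R > 0" and s: "s > 0"
  shows "test_fun (scaled_bump th s R :: real^'n::finite \<Rightarrow> real)"
proof -
  have "(\<lambda>x::real^'n. bump_pow th s ((1 / R) *\<^sub>R x)) \<in> radial_algebra" by (intro radial_algebra_scale bump_pow_radial_algebra th)
  then have sm: "smooth_fun (scaled_bump th s R :: real^'n \<Rightarrow> real)"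
    unfolding scaled_bump_def[abs_def] by (rule radial_algebra_smooth_fun)
  have sub: "{x::real^'n. scaled_bump th s R x \<noteq> 0} \<subseteq> cball 0 (th * R)"
  proof
    fix x :: "real^'n" assume "x \<in> {x. scaled_bump th s R x \<noteq> 0}"
    then have "\<not> norm x \<ge> th * R" using scaled_bump_eq_0[OF th R _ s, of x] by auto
    then show "x \<in> cball 0 (th * R)" by simp
  qed
  have "closure {x::real^'n. scaled_bump th s R x \<noteq> 0} \<subseteq> cball 0 (th * R)"
    by (rule closure_minimal[OF sub]) simp
  then have "compact (closure {x::real^'n. scaled_bump th s R x \<noteq> 0})"
    unfolding compact_eq_bounded_closed by (auto intro: bounded_subset[OF bounded_cball])
  then show ?thesis using sm by (simp add: test_fun_def)
qed

lemma multi_index_list: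
  fixes \<alpha> :: "'n::finite \<Rightarrow> nat"
  shows "\<exists>xs. \<forall>i. count_list xs i = \<alpha> i"
proof -
  have "finite {x. \<alpha> x > 0}" by simp
  then have c: "count (Abs_multiset \<alpha>) = \<alpha>" by (rule count_Abs_multiset)
  obtain xs where "mset xs = Abs_multiset \<alpha>" using ex_mset by blast
  then have "\<forall>i. count_list xs i = \<alpha> i" using c by (metis count_mset)
  then show ?thesis by blast
qed

lemma dpartial_eq_iter_partial:
  fixes \<alpha> :: "'n::finite \<Rightarrow> nat"
  assumes "\<alpha> \<in> multi_indices m"
  shows "\<exists>xs. length xs = m \<and> (\<forall>F. dpartial \<alpha> F = iter_partial xs F)"
proof -
  let ?xs = "SOME xs. \<forall>i. count_list xs i = \<alpha> i"
  have c: "\<forall>i. count_list ?xs i = \<alpha> i" using someI_ex[OF multi_index_list[of \<alpha>]] .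
  have "length ?xs = sum (count_list ?xs) UNIV" by (rule sum_count_set[symmetric]) auto
  also have "\<dots> = m" using c assms by (simp add: multi_indices_def)
  finally show ?thesis by (intro exI[of _ ?xs]) (simp add: dpartial_def)
qed

lemma dpartial_scaled_bump_bound:
  fixes \<alpha> :: "'n::finite \<Rightarrow> nat" and th lam :: real and s m :: nat
  assumes \<alpha>: "\<alpha> \<in> multi_indices m" and m: "m \<ge> 1" and th: "th > 1" and lam: "lam > 1"
    and sm: "m < s" and sl: "real s \<le> real (s - m) * lam"
  shows "\<exists>M\<ge>0. \<forall>R>0. \<forall>x::real^'n. \<bar>dpartial \<alpha> (scaled_bump th s R) x\<bar> \<le>
     M * (1 / R) ^ m * scaled_bump th s R x powr (1 / lam) * indicator (shell R (th * R)) x"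
proof -
  obtain xs where xs: "length xs = m" "\<forall>F. dpartial \<alpha> F = iter_partial xs F"
    using dpartial_eq_iter_partial[OF \<alpha>] by blast
  obtain M where M: "M \<ge> 0" "\<forall>y::real^'n. \<bar>iter_partial xs (bump_pow th s) y\<bar> \<le> M * bump_pow th s y powr (1 / lam)"
    using iter_partial_bump_pow_bound[OF th lam, of xs s] xs sm sl by auto
  have ne: "xs \<noteq> []" using xs m by auto
  show ?thesis
  proof (intro exI[of _ M] conjI allI impI)
    show "M \<ge> 0" by fact
    fix R :: real and x :: "real^'n" assume R: "R > 0"
    have eq: "dpartial \<alpha> (scaled_bump th s R) x = (1 / R) ^ m * iter_partial xs (bump_pow th s) ((1 / R) *\<^sub>R x)"
      using xs by (simp add: scaled_bump_def[abs_def] iter_partial_scale[OF bump_pow_radial_algebra[OF th]])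
    have bnd: "\<bar>dpartial \<alpha> (scaled_bump th s R) x\<bar> \<le> M * (1 / R) ^ m * scaled_bump th s R x powr (1 / lam)"
      using M(2)[rule_format, of "(1 / R) *\<^sub>R x"] R unfolding eq
      by (simp add: abs_mult scaled_bump_def mult_ac mult_left_mono)
    show "\<bar>dpartial \<alpha> (scaled_bump th s R) x\<bar> \<le>
     M * (1 / R) ^ m * scaled_bump th s R x powr (1 / lam) * indicator (shell R (th * R)) x"
    proof (cases "x \<in> shell R (th * R)")
      case True then show ?thesis using bnd by simp
    next
      case False
      then consider "norm x \<le> R" | "norm x > th * R" by (auto simp: shell_def not_le)
      then show ?thesis
      proof cases
        case 1
        then have "norm ((1 / R) *\<^sub>R x) \<le> 1" using R by (simp add: field_simps)
        then show ?thesis unfolding eq using iter_partial_bump_pow_inner[OF th ne] M(1) R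
          by (simp add: indicator_def)
      next
        case 2
        then have "scaled_bump th s R x = 0" using scaled_bump_eq_0[OF th R, of x s] sm by simp
        then show ?thesis using bnd False lam by simp
      qed
    qed
  qed
qed

lemma bump_exponent_exists:
  fixes m :: nat and lam :: real
  assumes m: "m \<ge> 1" and lam: "lam > 1"
  shows "\<exists>s. m < s \<and> real s \<le> real (s - m) * lam"
proof -
  define s where "s = nat \<lceil>real m * lam / (lam - 1)\<rceil>"
  have s1: "real m * lam / (lam - 1) \<le> real s" unfolding s_def by (rule real_nat_ceiling_ge)
  moreover have "real m < real m * lam / (lam - 1)" using m lam by (simp add: field_simps)
  ultimately have sm: "m < s" by linarith
  have "real m * lam \<le> real s * (lam - 1)" using s1 lam by (simp add: field_simps)
  then have "real s \<le> real (s - m) * lam" using sm by (simp add: of_nat_diff algebra_simps)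
  then show ?thesis using sm by blast
qed

section \<open>Integral estimates for a solution\<close>

locale solution_estimates =
  fixes m :: nat and lam :: real
    and A :: "('n::finite \<Rightarrow> nat) \<Rightarrow> real^'n \<Rightarrow> real \<Rightarrow> real"
    and a b f u :: "real^'n \<Rightarrow> real"
    and th :: real and s :: nat
  assumes m: "m \<ge> 1" and lam: "lam > 1"
    and b_pos: "\<forall>x. b x > 0"
    and a_nonneg: "\<forall>x. a x \<ge> 0"
    and A_bound: "AE x in lborel. \<forall>\<zeta>. \<forall>\<alpha>\<in>multi_indices m. \<bar>A \<alpha> x \<zeta>\<bar> \<le> a x * \<bar>\<zeta>\<bar>"
    and b_ge: "AE x in lborel. b x \<ge> a x powr lam * f x"
    and sol: "is_solution m A b lam u"
    and th: "th > 1" and s: "m < s" "real s \<le> real (s - m) * lam"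
begin

definition dens :: "real^'n \<Rightarrow> real" where "dens x = b x * \<bar>u x\<bar> powr lam"

lemma dens_nonneg: "0 \<le> dens x" using b_pos by (simp add: dens_def less_imp_le)

lemma integrable_indicator_dens: assumes "compact K" shows "integrable lborel (\<lambda>x. indicator K x * dens x)"
  using sol assms unfolding is_solution_def loc_integrable_def set_integrable_def dens_def by simp

definition mass :: "real \<Rightarrow> real" where "mass r = (\<integral>x. indicator (cball 0 r) x * dens x \<partial>lborel)"

lemma mass_nonneg: "mass r \<ge> 0"
  unfolding mass_def by (rule Bochner_Integration.integral_nonneg) (simp add: dens_nonneg)

lemma mass_mono: assumes "r \<le> r'" shows "mass r \<le> mass r'"
  unfolding mass_def
proof (rule Bochner_Integration.integral_mono[OF integrable_indicator_dens integrable_indicator_dens])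
  fix x
  show "indicator (cball 0 r) x * dens x \<le> indicator (cball 0 r') x * dens x"
    using assms dens_nonneg[of x] by (auto simp: indicator_def)
qed simp_all

lemma integrable_indicator_shell_dens: "integrable lborel (\<lambda>x. indicator (shell r R) x * dens x)"
proof -
  have "integrable lborel (\<lambda>x. indicator (shell r R) x *\<^sub>R (indicator (cball 0 R) x * dens x))"
    by (intro integrable_mult_indicator integrable_indicator_dens) auto
  moreover have "(\<lambda>x. indicator (shell r R) x *\<^sub>R (indicator (cball 0 R) x * dens x))
      = (\<lambda>x. indicator (shell r R) x * dens x)"
    by (auto simp: indicator_def fun_eq_iff shell_def)
  ultimately show ?thesis by simp
qed

lemma mass_shell:
  assumes "r \<le> R"
  shows "(\<integral>x. indicator (shell r R) x * dens x \<partial>lborel) = mass R - mass r"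
proof -
  have "(\<lambda>x. indicator (shell r R) x * dens x)
      = (\<lambda>x. indicator (cball 0 R) x * dens x - indicator (cball 0 r) x * dens x)"
    using assms by (auto simp: fun_eq_iff shell_def indicator_def)
  then show ?thesis
    unfolding mass_def using integrable_indicator_dens[of "cball 0 R"] integrable_indicator_dens[of "cball 0 r"]
    by simp
qed

lemma mass_pos_exists:
  assumes nz: "\<not> (AE x in lborel. u x = 0)"
  shows "\<exists>k. mass (th ^ k) > 0"
proof (rule ccontr)
  assume "\<not> (\<exists>k. mass (th ^ k) > 0)"
  then have mass0: "mass (th ^ k) = 0" for k using mass_nonneg[of "th ^ k"] by (meson not_less order_antisym)
  have "AE x in lborel. indicator (cball 0 (th ^ k)) x * dens x = 0" for k
    using mass0[of k] integral_nonneg_eq_0_iff_AE[OF integrable_indicator_dens[of "cball 0 (th ^ k)"]] dens_nonneg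
    by (simp add: mass_def)
  then have "AE x in lborel. \<forall>k. indicator (cball 0 (th ^ k)) x * dens x = 0"
    by (subst AE_all_countable) blast
  then have "AE x in lborel. u x = 0"
  proof (rule AE_mp, intro AE_I2 impI)
    fix x :: "real^'n"
    assume H: "\<forall>k. indicator (cball 0 (th ^ k)) x * dens x = 0"
    obtain k where "norm x < th ^ k" using real_arch_pow[OF th] by blast
    then have "dens x = 0" using H[rule_format, of k] by simp
    then show "u x = 0" using b_pos[rule_format, of x] by (simp add: dens_def)
  qed
  then show False using nz by simp
qed

definition test_fn :: "real \<Rightarrow> real^'n \<Rightarrow> real" where "test_fn R = scaled_bump th s R"

lemma test_fn_nonneg: "test_fn R x \<ge> 0" and test_fn_le_1: "test_fn R x \<le> 1"
  by (simp_all add: test_fn_def scaled_bump_nonneg scaled_bump_le_1)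

lemma test_fn_eq_1: "R > 0 \<Longrightarrow> norm x \<le> R \<Longrightarrow> test_fn R x = 1"
  using scaled_bump_eq_1[OF th] by (simp add: test_fn_def)

lemma test_fn_eq_0: "R > 0 \<Longrightarrow> norm x \<ge> th * R \<Longrightarrow> test_fn R x = 0"
  using scaled_bump_eq_0[OF th, of R x s] s by (simp add: test_fn_def)

lemma test_fn_test_fun: "R > 0 \<Longrightarrow> test_fun (test_fn R)"
  unfolding test_fn_def by (rule scaled_bump_test_fun[OF th]) (use s in simp_all)

lemma test_fn_measurable [measurable]: "test_fn R \<in> borel_measurable lborel"
proof -
  have "(\<lambda>x::real^'n. bump_pow th s ((1 / R) *\<^sub>R x)) \<in> radial_algebra"
    by (intro radial_algebra_scale bump_pow_radial_algebra th)
  then have "continuous_on UNIV (test_fn R)" unfolding test_fn_def scaled_bump_def[abs_def] by (rule radial_algebra_continuous)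
  then show ?thesis by (simp add: borel_measurable_continuous_onI)
qed

lemma integrable_dens_test_fn:
  assumes R: "R > 0"
  shows "integrable lborel (\<lambda>x. dens x * test_fn R x)"
proof -
  let ?K = "cball (0::real^'n) (th * R)"
  have intK: "integrable lborel (\<lambda>x. indicator ?K x * dens x)" by (rule integrable_indicator_dens) simp
  have eq: "dens x * test_fn R x = indicator ?K x * dens x * test_fn R x" for x
    using test_fn_eq_0[OF R, of x] by (cases "x \<in> ?K") auto
  show ?thesis
  proof (rule Bochner_Integration.integrable_bound[OF intK])
    have "(\<lambda>x. indicator ?K x * dens x * test_fn R x) \<in> borel_measurable lborel"
      using borel_measurable_integrable[OF intK] by measurable
    then show "(\<lambda>x. dens x * test_fn R x) \<in> borel_measurable lborel" by (subst eq) simp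
    show "AE x in lborel. norm (dens x * test_fn R x) \<le> norm (indicator ?K x * dens x)"
    proof (rule AE_I2)
      fix x
      have "\<bar>indicator ?K x * dens x * test_fn R x\<bar> \<le> \<bar>indicator ?K x * dens x\<bar>"
        using test_fn_nonneg[of R x] test_fn_le_1[of R x] by (simp add: abs_mult mult_left_le)
      then show "norm (dens x * test_fn R x) \<le> norm (indicator ?K x * dens x)" by (subst eq) simp
    qed
  qed
qed

definition dpartial_const :: "('n \<Rightarrow> nat) \<Rightarrow> real" where
  "dpartial_const \<alpha> = (SOME M. M \<ge> 0 \<and> (\<forall>R>0. \<forall>x. \<bar>dpartial \<alpha> (test_fn R) x\<bar> \<le>
     M * (1 / R) ^ m * test_fn R x powr (1 / lam) * indicator (shell R (th * R)) x))"

lemma dpartial_test_fn_bound: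
  assumes "\<alpha> \<in> multi_indices m"
  shows "dpartial_const \<alpha> \<ge> 0 \<and> (\<forall>R>0. \<forall>x. \<bar>dpartial \<alpha> (test_fn R) x\<bar> \<le>
     dpartial_const \<alpha> * (1 / R) ^ m * test_fn R x powr (1 / lam) * indicator (shell R (th * R)) x)"
  unfolding dpartial_const_def test_fn_def
  by (rule someI_ex) (rule dpartial_scaled_bump_bound[OF assms m th lam s])

definition dpartial_const_sum :: real where
  "dpartial_const_sum = 1 + (\<Sum>\<alpha>\<in>multi_indices m. dpartial_const \<alpha>)"

lemma dpartial_const_sum_pos: "dpartial_const_sum > 0"
proof -
  have "(\<Sum>\<alpha>\<in>multi_indices m. dpartial_const \<alpha>) \<ge> 0" by (intro sum_nonneg) (use dpartial_test_fn_bound in blast)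
  then show ?thesis by (simp add: dpartial_const_sum_def)
qed

lemma sum_A_dpartial_test_fn_le:
  assumes R: "R > 0" and Ax: "\<forall>\<zeta>. \<forall>\<alpha>\<in>multi_indices m. \<bar>A \<alpha> x \<zeta>\<bar> \<le> a x * \<bar>\<zeta>\<bar>"
  shows "(\<Sum>\<alpha>\<in>multi_indices m. A \<alpha> x (u x) * dpartial \<alpha> (test_fn R) x) \<le>
    dpartial_const_sum * ((1 / R) ^ m * indicator (shell R (th * R)) x * (a x * \<bar>u x\<bar> * test_fn R x powr (1 / lam)))"
proof -
  define X where "X = (1 / R) ^ m * indicator (shell R (th * R)) x * (a x * \<bar>u x\<bar> * test_fn R x powr (1 / lam))"
  have X0: "X \<ge> 0" using R a_nonneg by (simp add: X_def)
  have "(\<Sum>\<alpha>\<in>multi_indices m. A \<alpha> x (u x) * dpartial \<alpha> (test_fn R) x) \<le> (\<Sum>\<alpha>\<in>multi_indices m. dpartial_const \<alpha> * X)"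
  proof (rule sum_mono)
    fix \<alpha> :: "'n \<Rightarrow> nat" assume \<alpha>: "\<alpha> \<in> multi_indices m"
    have "A \<alpha> x (u x) * dpartial \<alpha> (test_fn R) x \<le> \<bar>A \<alpha> x (u x)\<bar> * \<bar>dpartial \<alpha> (test_fn R) x\<bar>"
      by (simp add: abs_mult[symmetric])
    also have "\<dots> \<le> (a x * \<bar>u x\<bar>) * (dpartial_const \<alpha> * (1 / R) ^ m * test_fn R x powr (1 / lam) * indicator (shell R (th * R)) x)"
      using Ax \<alpha> dpartial_test_fn_bound[OF \<alpha>] R a_nonneg by (intro mult_mono) auto
    also have "\<dots> = dpartial_const \<alpha> * X" by (simp add: X_def mult_ac)
    finally show "A \<alpha> x (u x) * dpartial \<alpha> (test_fn R) x \<le> dpartial_const \<alpha> * X" .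
  qed
  also have "\<dots> = (\<Sum>\<alpha>\<in>multi_indices m. dpartial_const \<alpha>) * X" by (simp add: sum_distrib_right)
  also have "\<dots> \<le> dpartial_const_sum * X" using X0 by (intro mult_right_mono) (auto simp: dpartial_const_sum_def)
  finally show ?thesis by (simp add: X_def)
qed

text \<open>Only the shell carries derivatives of \<open>\<phi> = test_fn R\<close>, and there Young's inequality trades
  \<open>a |u| \<phi>\<^sup>1\<^sup>/\<^sup>\<lambda>\<close> for \<open>e b |u|\<^sup>\<lambda> \<phi>\<close> plus a constant, since \<open>a\<^sup>\<lambda> c \<le> a\<^sup>\<lambda> f \<le> b\<close>.\<close>
lemma sum_A_dpartial_test_fn_le_young:
  assumes R: "R > 0" and c: "c > 0" and e: "e > 0"
    and fc: "x \<in> shell R (th * R) \<longrightarrow> c \<le> f x"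
    and Ax: "\<forall>\<zeta>. \<forall>\<alpha>\<in>multi_indices m. \<bar>A \<alpha> x \<zeta>\<bar> \<le> a x * \<bar>\<zeta>\<bar>" and bx: "b x \<ge> a x powr lam * f x"
  defines "k \<equiv> dpartial_const_sum * (1 / R) ^ m" and "D \<equiv> shell R (th * R)"
  shows "(\<Sum>\<alpha>\<in>multi_indices m. A \<alpha> x (u x) * dpartial \<alpha> (test_fn R) x)
    \<le> k * e * (indicator D x * dens x * test_fn R x) + k * (e * c) powr (- 1 / (lam - 1)) * indicator D x"
proof -
  have k: "k > 0" using dpartial_const_sum_pos R by (simp add: k_def)
  have 1: "(\<Sum>\<alpha>\<in>multi_indices m. A \<alpha> x (u x) * dpartial \<alpha> (test_fn R) x) \<le>
      k * (indicator D x * (a x * \<bar>u x\<bar> * test_fn R x powr (1 / lam)))"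
    using sum_A_dpartial_test_fn_le[OF R Ax] by (simp add: D_def k_def mult_ac)
  show ?thesis
  proof (cases "x \<in> D")
    case True
    have "a x powr lam * c \<le> a x powr lam * f x" using True fc by (intro mult_left_mono) (auto simp: D_def)
    then have ab: "a x powr lam * c \<le> b x" using bx by simp
    have "a x * \<bar>u x\<bar> * test_fn R x powr (1 / lam)
        \<le> e * (b x * \<bar>u x\<bar> powr lam) * test_fn R x + (e * c) powr (- 1 / (lam - 1))"
      by (rule young_absorb) (use a_nonneg b_pos test_fn_nonneg c e lam ab in auto)
    then have "k * (a x * \<bar>u x\<bar> * test_fn R x powr (1 / lam))
        \<le> k * (e * (b x * \<bar>u x\<bar> powr lam) * test_fn R x + (e * c) powr (- 1 / (lam - 1)))"
      using k by (intro mult_left_mono) auto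
    then show ?thesis using 1 True by (simp add: dens_def algebra_simps)
  qed (use 1 in simp)
qed

lemma weak_inequality_absorbed:
  assumes R: "R > 0" and c: "c > 0" and e: "e > 0"
    and fc: "AE x in lborel. x \<in> shell R (th * R) \<longrightarrow> c \<le> f x"
  defines "k \<equiv> dpartial_const_sum * (1 / R) ^ m" and "D \<equiv> shell R (th * R)"
  shows "(\<integral>x. dens x * test_fn R x \<partial>lborel)
    \<le> k * e * (\<integral>x. indicator D x * dens x * test_fn R x \<partial>lborel)
       + k * (e * c) powr (- 1 / (lam - 1)) * (measure lborel (ball (0::real^'n) 1) * (th * R) ^ CARD('n))"
proof -
  define T where "T = (e * c) powr (- 1 / (lam - 1))"
  define G where "G x = k * e * (indicator D x * dens x * test_fn R x) + k * T * indicator D x" for x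
  have k: "k > 0" using dpartial_const_sum_pos R by (simp add: k_def)
  have intI: "integrable lborel (\<lambda>x. indicator D x * dens x * test_fn R x)"
    using integrable_mult_indicator[OF _ integrable_dens_test_fn[OF R], of D] by (auto simp: D_def mult.assoc)
  have finD: "emeasure lborel D < \<infinity>"
    using emeasure_mono[of D "cball 0 (th * R)" lborel] emeasure_lborel_cball_finite[of "0::real^'n" "th * R"]
    by (auto simp: D_def shell_def)
  have intD: "integrable lborel (indicator D :: real^'n \<Rightarrow> real)"
    using finD by (intro integrable_real_indicator) (simp_all add: D_def)
  have AEb: "AE x in lborel. (\<Sum>\<alpha>\<in>multi_indices m. A \<alpha> x (u x) * dpartial \<alpha> (test_fn R) x) \<le> G x"
    using A_bound b_ge fc
    by eventually_elim (use sum_A_dpartial_test_fn_le_young[OF R c e] in \<open>simp add: G_def T_def k_def D_def\<close>)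
  have intG: "integrable lborel G" unfolding G_def[abs_def] using intI intD by simp
  have "(\<integral>x. dens x * test_fn R x \<partial>lborel)
      \<le> (\<integral>x. (\<Sum>\<alpha>\<in>multi_indices m. A \<alpha> x (u x) * dpartial \<alpha> (test_fn R) x) \<partial>lborel)"
    using sol test_fn_nonneg test_fn_test_fun[OF R] unfolding is_solution_def dens_def by blast
  also have "\<dots> \<le> (\<integral>x. G x \<partial>lborel)"
  proof (cases "integrable lborel (\<lambda>x. \<Sum>\<alpha>\<in>multi_indices m. A \<alpha> x (u x) * dpartial \<alpha> (test_fn R) x)")
    case True then show ?thesis by (rule integral_mono_AE[OF _ intG AEb])
  next
    case False
    have "G x \<ge> 0" for x using k e dens_nonneg[of x] test_fn_nonneg[of R x] by (simp add: G_def T_def)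
    then show ?thesis using not_integrable_integral_eq[OF False] by (simp add: Bochner_Integration.integral_nonneg)
  qed
  also have "\<dots> = k * e * (\<integral>x. indicator D x * dens x * test_fn R x \<partial>lborel) + k * T * measure lborel D"
    unfolding G_def using intI intD by simp
  also have "k * T * measure lborel D \<le> k * T * (measure lborel (ball (0::real^'n) 1) * (th * R) ^ CARD('n))"
    using measure_shell_le[of "th * R" R] th R k by (intro mult_left_mono) (auto simp: D_def T_def)
  finally show ?thesis by (simp add: T_def)
qed

lemma mass_estimates:
  assumes R: "R > 0" and c: "c > 0"
    and fc: "AE x in lborel. x \<in> shell R (th * R) \<longrightarrow> c \<le> f x"
  defines "C \<equiv> (2 * (dpartial_const_sum * (1 / R) ^ m)) powr lam
           * (measure lborel (ball (0::real^'n) 1) * (th * R) ^ CARD('n)) powr (lam - 1)"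
  shows "c * mass R powr (lam - 1) \<le> C"
    and "mass R > 0 \<Longrightarrow> c * mass R powr lam \<le> C * (mass (th * R) - mass R)"
proof -
  define k where "k = dpartial_const_sum * (1 / R) ^ m"
  define W where "W = measure lborel (ball (0::real^'n) 1) * (th * R) ^ CARD('n)"
  define D where "D = (shell R (th * R) :: (real^'n) set)"
  define L where "L = (\<integral>x. dens x * test_fn R x \<partial>lborel)"
  define I where "I = (\<integral>x. indicator D x * dens x * test_fn R x \<partial>lborel)"
  have k: "k > 0" using dpartial_const_sum_pos R by (simp add: k_def)
  have W: "W > 0" using th R content_ball_pos[of 1 "0::real^'n"] by (simp add: W_def)
  have intL: "integrable lborel (\<lambda>x. dens x * test_fn R x)" by (rule integrable_dens_test_fn[OF R])
  have intI: "integrable lborel (\<lambda>x. indicator D x * dens x * test_fn R x)"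
    using integrable_mult_indicator[OF _ intL, of D] by (auto simp: D_def mult.assoc)
  have key: "L \<le> k * e * I + k * (e * c) powr (- 1 / (lam - 1)) * W" if "e > 0" for e
    using weak_inequality_absorbed[OF R c that fc] by (simp add: L_def I_def k_def D_def W_def)
  have "mass R \<le> L" unfolding mass_def L_def
    by (rule Bochner_Integration.integral_mono[OF integrable_indicator_dens intL])
      (use test_fn_eq_1[OF R] test_fn_nonneg dens_nonneg in \<open>auto simp: indicator_def\<close>)
  moreover have "I \<le> L" unfolding I_def L_def
    by (rule Bochner_Integration.integral_mono[OF intI intL])
      (use test_fn_nonneg dens_nonneg in \<open>auto simp: indicator_def\<close>)
  moreover have "I \<le> mass (th * R) - mass R"
  proof -
    have "I \<le> (\<integral>x. indicator D x * dens x \<partial>lborel)" unfolding I_def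
      by (rule Bochner_Integration.integral_mono[OF intI])
        (use integrable_indicator_shell_dens test_fn_le_1 dens_nonneg in
          \<open>auto simp: D_def indicator_def mult_left_le\<close>)
    also have "\<dots> = mass (th * R) - mass R" unfolding D_def using th R by (intro mass_shell) simp
    finally show ?thesis .
  qed
  ultimately show "c * mass R powr (lam - 1) \<le> C"
    and "mass R > 0 \<Longrightarrow> c * mass R powr lam \<le> C * (mass (th * R) - mass R)"
    using absorbed_bound_powr_lam_minus_1[OF k W c lam mass_nonneg _ _ key]
      absorbed_bound_powr_lam[OF k W c lam _ _ _ key] by (simp_all add: C_def k_def W_def)
qed

definition crit_exp :: real where "crit_exp = (real m - real CARD('n)) * lam + real CARD('n)"

definition scaled_const :: real where
  "scaled_const = (2 * dpartial_const_sum) powr lam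
     * (measure lborel (ball (0::real^'n) 1) * th ^ CARD('n)) powr (lam - 1)"

definition telescope_const :: real where
  "telescope_const = 2 powr lam / (lam - 1) + 1 / (1 - 2 powr (1 - lam))"

lemma scaled_const_nonneg: "scaled_const \<ge> 0" by (simp add: scaled_const_def)

lemma telescope_const_pos: "telescope_const > 0"
proof -
  have "2 powr (1 - lam) < 1" using lam by (simp add: powr_less_one)
  then show ?thesis using lam unfolding telescope_const_def by (intro add_pos_pos) auto
qed

lemma estimate_const_scaling:
  assumes R: "R > 0"
  shows "(2 * (dpartial_const_sum * (1 / R) ^ m)) powr lam
           * (measure lborel (ball (0::real^'n) 1) * (th * R) ^ CARD('n)) powr (lam - 1) * R powr crit_exp = scaled_const"
proof -
  define V where "V = measure lborel (ball (0::real^'n) 1)"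
  define n where "n = CARD('n)"
  have V: "V > 0" unfolding V_def using content_ball_pos[of 1 "0::real^'n"] by simp
  have M: "dpartial_const_sum > 0" by (rule dpartial_const_sum_pos)
  have e1: "((1 / R) ^ m) powr lam = R powr (- real m * lam)"
    using R by (simp add: powr_realpow[symmetric] powr_powr powr_minus_divide[symmetric] powr_divide
        flip: powr_minus)
  have e2: "(R ^ n) powr (lam - 1) = R powr (real n * (lam - 1))"
    using R by (simp add: powr_realpow[symmetric] powr_powr)
  have "(2 * (dpartial_const_sum * (1 / R) ^ m)) powr lam = (2 * dpartial_const_sum) powr lam * ((1 / R) ^ m) powr lam"
    using M R by (simp add: powr_mult[symmetric] mult.assoc)
  moreover have "(V * (th * R) ^ n) powr (lam - 1) = (V * th ^ n) powr (lam - 1) * (R ^ n) powr (lam - 1)"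
    using V th R by (simp add: powr_mult[symmetric] power_mult_distrib mult_ac)
  ultimately have "(2 * (dpartial_const_sum * (1 / R) ^ m)) powr lam * (V * (th * R) ^ n) powr (lam - 1) * R powr crit_exp
      = (2 * dpartial_const_sum) powr lam * (V * th ^ n) powr (lam - 1) * (R powr (- real m * lam) * R powr (real n * (lam - 1)) * R powr crit_exp)"
    by (simp add: e1 e2 mult_ac)
  also have "R powr (- real m * lam) * R powr (real n * (lam - 1)) * R powr crit_exp = 1"
    using R by (simp add: powr_add[symmetric] crit_exp_def n_def algebra_simps)
  finally show ?thesis by (simp add: scaled_const_def V_def n_def)
qed

lemma mass_decrement_bound:
  assumes R: "R > 0" and c: "c > 0" and JP: "mass R > 0"
    and fc: "AE x in lborel. x \<in> shell R (th * R) \<longrightarrow> c \<le> f x"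
  shows "c * R powr crit_exp
    \<le> scaled_const * telescope_const * (mass R powr (1 - lam) - mass (th * R) powr (1 - lam))"
  unfolding telescope_const_def
proof (rule powr_telescope_bound[OF JP _ lam scaled_const_nonneg])
  let ?C = "(2 * (dpartial_const_sum * (1 / R) ^ m)) powr lam
           * (measure lborel (ball (0::real^'n) 1) * (th * R) ^ CARD('n)) powr (lam - 1)"
  have Rp: "R powr crit_exp \<ge> 0" by simp
  note est = mass_estimates[OF R c fc]
  show "mass R \<le> mass (th * R)" using th R by (intro mass_mono) simp
  show "c * R powr crit_exp * mass R powr (lam - 1) \<le> scaled_const"
    using mult_right_mono[OF est(1) Rp] estimate_const_scaling[OF R] by (simp add: mult_ac)
  have "c * mass R powr lam * R powr crit_exp \<le> ?C * (mass (th * R) - mass R) * R powr crit_exp"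
    by (rule mult_right_mono[OF est(2)[OF JP] Rp])
  also have "\<dots> = (?C * R powr crit_exp) * (mass (th * R) - mass R)" by (simp add: mult_ac)
  also have "\<dots> = scaled_const * (mass (th * R) - mass R)" by (simp only: estimate_const_scaling[OF R])
  finally show "c * R powr crit_exp * mass R powr lam \<le> scaled_const * (mass (th * R) - mass R)"
    by (simp add: mult_ac)
qed

lemma ess_inf_shell_le_mass_decrement:
  assumes R: "R > 0" and JP: "mass R > 0"
  shows "ess_inf_on (shell R (th * R)) f
    \<le> ereal (scaled_const * telescope_const * (mass R powr (1 - lam) - mass (th * R) powr (1 - lam))
              / R powr crit_exp)"
proof (rule ess_inf_on_le_ereal)
  show "\<not> (AE x in lborel. x \<notin> shell R (th * R))" using R th by (intro shell_not_null) auto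
  have "mass R \<le> mass (th * R)" using th R by (intro mass_mono) simp
  then have "mass (th * R) powr (1 - lam) \<le> mass R powr (1 - lam)" using JP lam by (intro powr_mono2') auto
  then show "0 \<le> scaled_const * telescope_const * (mass R powr (1 - lam) - mass (th * R) powr (1 - lam))
              / R powr crit_exp"
    using scaled_const_nonneg telescope_const_pos by simp
  fix c :: real assume "c > 0" "AE x in lborel. x \<in> shell R (th * R) \<longrightarrow> c \<le> f x"
  then show "c \<le> scaled_const * telescope_const * (mass R powr (1 - lam) - mass (th * R) powr (1 - lam))
              / R powr crit_exp"
    using mass_decrement_bound[OF R _ JP] R by (simp add: pos_le_divide_eq)
qed

definition shell_term :: "nat \<Rightarrow> ennreal" where
  "shell_term k = ennreal ((th ^ k) powr (crit_exp - 1) * (th ^ Suc k - th ^ k))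
     * e2ennreal (ess_inf_on (shell (th ^ k) (th * th ^ k)) f)"

lemma shell_term_le_mass_decrement:
  assumes JP: "mass (th ^ k) > 0"
  shows "shell_term k \<le> ennreal ((th - 1) * scaled_const * telescope_const
           * (mass (th ^ k) powr (1 - lam) - mass (th * th ^ k) powr (1 - lam)))"
proof -
  define B where "B = scaled_const * telescope_const * (mass (th ^ k) powr (1 - lam) - mass (th * th ^ k) powr (1 - lam))"
  have tk: "th ^ k > 0" using th by simp
  have "mass (th ^ k) \<le> mass (th * th ^ k)" using th tk by (intro mass_mono) simp
  then have "mass (th * th ^ k) powr (1 - lam) \<le> mass (th ^ k) powr (1 - lam)" using JP lam by (intro powr_mono2') auto
  then have B0: "B \<ge> 0" using scaled_const_nonneg telescope_const_pos by (simp add: B_def)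
  have "e2ennreal (ess_inf_on (shell (th ^ k) (th * th ^ k)) f) \<le> e2ennreal (ereal (B / (th ^ k) powr crit_exp))"
    using ess_inf_shell_le_mass_decrement[OF tk JP] by (intro e2ennreal_mono) (simp add: B_def)
  then have "shell_term k \<le> ennreal ((th ^ k) powr (crit_exp - 1) * (th ^ Suc k - th ^ k)) * ennreal (B / (th ^ k) powr crit_exp)"
    unfolding shell_term_def by (intro mult_left_mono) simp_all
  also have "\<dots> = ennreal ((th ^ k) powr (crit_exp - 1) * (th ^ Suc k - th ^ k) * (B / (th ^ k) powr crit_exp))"
    using th B0 by (intro ennreal_mult[symmetric]) simp_all
  also have "(th ^ k) powr (crit_exp - 1) * (th ^ Suc k - th ^ k) * (B / (th ^ k) powr crit_exp) = (th - 1) * B"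
  proof -
    have "(th ^ k) powr (crit_exp - 1) * th ^ k = (th ^ k) powr crit_exp" using tk by (simp add: powr_diff)
    then have "(th ^ k) powr (crit_exp - 1) * (th ^ Suc k - th ^ k) = (th - 1) * (th ^ k) powr crit_exp"
      by (simp add: algebra_simps)
    then have "(th ^ k) powr (crit_exp - 1) * (th ^ Suc k - th ^ k) * (B / (th ^ k) powr crit_exp)
        = (th - 1) * (th ^ k) powr crit_exp * (B / (th ^ k) powr crit_exp)"
      by simp
    also have "\<dots> = (th - 1) * B" using th by simp
    finally show ?thesis .
  qed
  finally show ?thesis by (simp add: B_def mult_ac)
qed

lemma shell_term_bounded:
  assumes f: "loc_ess_bounded f"
  shows "\<exists>C\<ge>0. shell_term k \<le> ennreal C"
proof -
  have tk: "th ^ k > 0" using th by simp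
  obtain C where C: "ess_inf_on (shell (th ^ k) (th * th ^ k)) f \<le> ereal C"
    using ess_inf_shell_bounded[OF f, of "th ^ k" "th * th ^ k"] th tk by auto
  have "ess_inf_on (shell (th ^ k) (th * th ^ k)) f \<le> ereal (max 0 C)"
    using C by (meson max.cobounded2 ereal_less_eq(3) order_trans)
  from e2ennreal_mono[OF this]
  have "e2ennreal (ess_inf_on (shell (th ^ k) (th * th ^ k)) f) \<le> ennreal (max 0 C)"
    by (simp only: e2ennreal_ereal)
  then have "shell_term k \<le> ennreal ((th ^ k) powr (crit_exp - 1) * (th ^ Suc k - th ^ k)) * ennreal (max 0 C)"
    unfolding shell_term_def by (intro mult_left_mono) simp_all
  also have "\<dots> = ennreal ((th ^ k) powr (crit_exp - 1) * (th ^ Suc k - th ^ k) * max 0 C)"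
    using th by (simp add: ennreal_mult[symmetric])
  finally show ?thesis using th by (intro exI conjI) simp_all
qed

lemma suminf_shell_term_finite:
  assumes f: "loc_ess_bounded f" and k0: "mass (th ^ k0) > 0"
  shows "(\<Sum>k. shell_term k) < \<infinity>"
proof -
  obtain C where C: "\<And>k. C k \<ge> 0" "\<And>k. shell_term k \<le> ennreal (C k)"
    using shell_term_bounded[OF f] by metis
  define G where "G k = (th - 1) * scaled_const * telescope_const * mass (th ^ max k k0) powr (1 - lam)" for k
  have mass_pos: "mass (th ^ k) > 0" if "k \<ge> k0" for k
    using k0 mass_mono[of "th ^ k0" "th ^ k"] power_increasing[OF that, of th] th by simp
  have c0: "(th - 1) * scaled_const * telescope_const \<ge> 0"
    using th scaled_const_nonneg telescope_const_pos by simp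
  have Gdec: "G (Suc k) \<le> G k" for k
  proof -
    have "mass (th ^ max k k0) \<le> mass (th ^ max (Suc k) k0)" using th by (intro mass_mono power_increasing) auto
    then have "mass (th ^ max (Suc k) k0) powr (1 - lam) \<le> mass (th ^ max k k0) powr (1 - lam)"
      using mass_pos[of "max k k0"] lam by (intro powr_mono2') auto
    then show ?thesis unfolding G_def using c0 by (intro mult_left_mono) auto
  qed
  show ?thesis
  proof (rule suminf_telescope_bound_finite[where y="\<lambda>k. if k < k0 then C k else 0" and N=k0])
    fix k
    show "shell_term k \<le> ennreal ((if k < k0 then C k else 0) + (G k - G (Suc k)))"
    proof (cases "k < k0")
      case True
      then show ?thesis using C(2)[of k] Gdec[of k] by (simp add: order_trans[OF _ ennreal_leI])
    next
      case False
      then have "G k - G (Suc k) = (th - 1) * scaled_const * telescope_const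
          * (mass (th ^ k) powr (1 - lam) - mass (th * th ^ k) powr (1 - lam))"
        by (simp add: G_def max_def algebra_simps)
      then show ?thesis using shell_term_le_mass_decrement[OF mass_pos] False by simp
    qed
  qed (use C Gdec c0 in \<open>auto simp: G_def\<close>)
qed

lemma radial_integral_finite:
  assumes f: "loc_ess_bounded f" and k0: "mass (th ^ k0) > 0"
  shows "(\<integral>\<^sup>+ r\<in>{1..}. ennreal (r powr (crit_exp - 1))
           * e2ennreal (ess_inf_on (ball 0 (th * th * r) - ball 0 (r / (th * th))) f) \<partial>lborel) < \<infinity>"
proof -
  define c where "c = th powr \<bar>crit_exp - 1\<bar>"
  have "(\<integral>\<^sup>+ r\<in>{1..}. ennreal (r powr (crit_exp - 1))
           * e2ennreal (ess_inf_on (ball 0 (th * th * r) - ball 0 (r / (th * th))) f) \<partial>lborel)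
      \<le> (\<Sum>k. ennreal c * e2ennreal (ess_inf_on (shell (th ^ k) (th * th ^ k)) f)
               * ennreal ((th ^ k) powr (crit_exp - 1)) * ennreal (th ^ Suc k - th ^ k))"
  proof (rule nn_integral_geometric_partition[OF th])
    fix k r assume r: "th ^ k \<le> r" "r < th ^ Suc k"
    have tk: "th ^ k > 0" using th by simp
    have "r powr (crit_exp - 1) \<le> c * (th ^ k) powr (crit_exp - 1)"
      using powr_le_on_interval[OF th tk r(1)] r(2) by (simp add: c_def)
    moreover have "ess_inf_on (ball 0 (th * th * r) - ball 0 (r / (th * th))) f
        \<le> ess_inf_on (shell (th ^ k) (th * th ^ k)) f"
      using r th tk by (intro ess_inf_on_antimono shell_subset_ball_diff) auto
    ultimately have "ennreal (r powr (crit_exp - 1)) * e2ennreal (ess_inf_on (ball 0 (th * th * r) - ball 0 (r / (th * th))) f)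
        \<le> ennreal (c * (th ^ k) powr (crit_exp - 1)) * e2ennreal (ess_inf_on (shell (th ^ k) (th * th ^ k)) f)"
      by (intro mult_mono ennreal_leI e2ennreal_mono) simp_all
    then show "ennreal (r powr (crit_exp - 1)) * e2ennreal (ess_inf_on (ball 0 (th * th * r) - ball 0 (r / (th * th))) f)
        \<le> ennreal c * e2ennreal (ess_inf_on (shell (th ^ k) (th * th ^ k)) f) * ennreal ((th ^ k) powr (crit_exp - 1))"
      by (simp add: c_def ennreal_mult mult_ac)
  qed
  also have "\<dots> = (\<Sum>k. ennreal c * shell_term k)"
  proof (rule suminf_cong)
    fix k
    have "th ^ k \<le> th ^ Suc k" using th by simp
    then show "ennreal c * e2ennreal (ess_inf_on (shell (th ^ k) (th * th ^ k)) f)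
        * ennreal ((th ^ k) powr (crit_exp - 1)) * ennreal (th ^ Suc k - th ^ k) = ennreal c * shell_term k"
      by (simp add: shell_term_def ennreal_mult mult_ac)
  qed
  also have "\<dots> = ennreal c * (\<Sum>k. shell_term k)" by simp
  also have "\<dots> < \<infinity>" using suminf_shell_term_finite[OF f k0] by (simp add: ennreal_mult_less_top)
  finally show ?thesis .
qed

end

theorem theorem4p1:
  fixes m :: nat and lam \<sigma> :: real
    and A :: "('n::finite \<Rightarrow> nat) \<Rightarrow> real^'n \<Rightarrow> real \<Rightarrow> real"
    and a b f u :: "real^'n \<Rightarrow> real"
  assumes m: "m \<ge> 1" and lam: "lam > 1"
    and b_pos: "\<forall>x. b x > 0" and b_meas: "b \<in> borel_measurable lborel"
    and a_nonneg: "\<forall>x. a x \<ge> 0" and a_meas: "a \<in> borel_measurable lborel"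
    and A_bound: "AE x in lborel. \<forall>\<zeta>. \<forall>\<alpha>\<in>multi_indices m. \<bar>A \<alpha> x \<zeta>\<bar> \<le> a x * \<bar>\<zeta>\<bar>"
    and f_loc: "loc_ess_bounded f" and f_nonneg: "\<forall>x. f x \<ge> 0"
    and b_ge: "AE x in lborel. b x \<ge> a x powr lam * f x"
    and sigma: "\<sigma> > 1"
    and diverge: "(\<integral>\<^sup>+ r\<in>{1..}. ennreal (r powr ((real m - real CARD('n)) * lam + real CARD('n) - 1))
                     * e2ennreal (ess_inf_on (ball 0 (\<sigma> * r) - ball 0 (r / \<sigma>)) f) \<partial>lborel) = \<infinity>"
    and sol: "is_solution m A b lam u"
  shows "AE x in lborel. u x = 0"
proof (rule ccontr)
  assume nz: "\<not> (AE x in lborel. u x = 0)"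
  define th where "th = sqrt \<sigma>"
  have th: "th > 1" and sig: "\<sigma> = th * th" using sigma by (simp_all add: th_def)
  obtain s where s: "m < s" "real s \<le> real (s - m) * lam" using bump_exponent_exists[OF m lam] by blast
  interpret solution_estimates m lam A a b f u th s
    by unfold_locales (use m lam b_pos a_nonneg A_bound b_ge sol th s in auto)
  obtain k0 where "mass (th ^ k0) > 0" using mass_pos_exists[OF nz] by blast
  from radial_integral_finite[OF f_loc this] show False
    using diverge by (simp add: sig crit_exp_def)
qed

end
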